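(* Let $d\ge3$, $n_1,\dots,n_d,k$ positive integers, $\mathfrak{L}$ an invertible linear transform as in the context, $\tau>0$, $0<p<1$ and $w=(w_{i,j})$ nonnegative weights. Let $\boldsymbol{\mathcal{A}}=\boldsymbol{\mathcal{Q}}_1*_{\mathfrak{L}}\boldsymbol{\mathcal{B}}*_{\mathfrak{L}}\boldsymbol{\mathcal{Q}}_2^T\in\mathbb{R}^{n_1\times n_2\times n_3\times\cdots\times n_d}$, where $\boldsymbol{\mathcal{Q}}_1\in\mathbb{R}^{n_1\times k\times n_3\times\cdots\times n_d}$ and $\boldsymbol{\mathcal{Q}}_2\in\mathbb{R}^{n_2\times k\times n_3\times\cdots\times n_d}$ are partially orthogonal and $\boldsymbol{\mathcal{B}}\in\mathbb{R}^{k\times k\times n_3\times\cdots\times n_d}$. Then $$\boldsymbol{\mathcal{D}}_{\boldsymbol{\mathcal{W}},p,\tau}(\boldsymbol{\mathcal{A}})=\boldsymbol{\mathcal{Q}}_1*_{\mathfrak{L}}\boldsymbol{\mathcal{D}}_{\boldsymbol{\mathcal{W}},p,\tau}(\boldsymbol{\mathcal{B}})*_{\mathfrak{L}}\boldsymbol{\mathcal{Q}}_2^T.$$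
   Context: Transform: for $i=3,\dots,d$ let $\bm U_{n_i}\in\mathbb{C}^{n_i\times n_i}$ satisfy $\bm U_{n_i}\bm U_{n_i}^H=\bm U_{n_i}^H\bm U_{n_i}=\alpha_i\bm I_{n_i}$, $\alpha_i>0$. For a tensor $\boldsymbol{\mathcal{A}}$ of size $m_1\times m_2\times n_3\times\cdots\times n_d$, $\mathfrak{L}(\boldsymbol{\mathcal{A}})=\boldsymbol{\mathcal{A}}\times_3\bm U_{n_3}\cdots\times_d\bm U_{n_d}$ (mode-$k$ product $\boldsymbol{\mathcal{B}}=\boldsymbol{\mathcal{A}}\times_k\bm M$ iff $\bm B_{(k)}=\bm M\bm A_{(k)}$), with inverse $\mathfrak{L}^{-1}$. Frontal slices $\boldsymbol{\mathcal{A}}^{<j>}=\boldsymbol{\mathcal{A}}(:,:,i_3,\dots,i_d)$, $j=i_3+\sum_{a=4}^d(i_a-1)\prod_{b=3}^{a-1}n_b\in\{1,\dots,N\}$, $N=n_3\cdots n_d$. t-product: $\boldsymbol{\mathcal{C}}=\boldsymbol{\mathcal{A}}*_{\mathfrak{L}}\boldsymbol{\mathcal{B}}$ iff $\mathfrak{L}(\boldsymbol{\mathcal{C}})^{<j>}=\mathfrak{L}(\boldsymbol{\mathcal{A}})^{<j>}\mathfrak{L}(\boldsymbol{\mathcal{B}})^{<j>}$ for all $j$. Transpose: $\mathfrak{L}(\boldsymbol{\mathcal{A}}^T)^{<j>}=(\mathfrak{L}(\boldsymbol{\mathcal{A}})^{<j>})^H$. Identity tensor: $\mathfrak{L}(\boldsymbol{\mathcal{I}})^{<j>}=\bm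 I$ for all $j$. $\boldsymbol{\mathcal{Q}}$ is partially orthogonal if $\boldsymbol{\mathcal{Q}}^T*_{\mathfrak{L}}\boldsymbol{\mathcal{Q}}=\boldsymbol{\mathcal{I}}$, orthogonal if also $\boldsymbol{\mathcal{Q}}*_{\mathfrak{L}}\boldsymbol{\mathcal{Q}}^T=\boldsymbol{\mathcal{I}}$. f-diagonal: all frontal slices diagonal. T-SVD: $\boldsymbol{\mathcal{A}}=\boldsymbol{\mathcal{U}}*_{\mathfrak{L}}\boldsymbol{\mathcal{S}}*_{\mathfrak{L}}\boldsymbol{\mathcal{V}}^T$, $\boldsymbol{\mathcal{U}},\boldsymbol{\mathcal{V}}$ orthogonal, $\boldsymbol{\mathcal{S}}$ f-diagonal, obtained from slice-wise SVDs of $\mathfrak{L}(\boldsymbol{\mathcal{A}})^{<j>}$ with singular values in non-increasing order. GST: for $s\in\mathbb{R}$, $w\ge0$, $0<p<1$, $\delta=[2w(1-p)]^{\frac1{2-p}}+wp[2w(1-p)]^{\frac{p-1}{2-p}}$; $\mathrm{GST}(s,w,p)=0$ if $|s|\le\delta$, else $\mathrm{sign}(s)\hat\alpha^*$ with $\hat\alpha^*$ the largest positive root of $\alpha+wp\alpha^{p-1}=|s|$; $\mathrm{GST}(s,0,p)=s$. GTSVT: for a tensor $\boldsymbol{\mathcal{A}}$ of size $m_1\times m_2\times n_3\times\cdots\times n_d$ with T-SVD $\boldsymbol{\mathcal{U}}*_{\mathfrak{L}}\boldsymbol{\mathcal{S}}*_{\mathfrak{L}}\boldsymbol{\mathcal{V}}^T$,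 $\boldsymbol{\mathcal{D}}_{\boldsymbol{\mathcal{W}},p,\tau}(\boldsymbol{\mathcal{A}})=\boldsymbol{\mathcal{U}}*_{\mathfrak{L}}\mathfrak{L}^{-1}(\hat{\boldsymbol{\mathcal{S}}})*_{\mathfrak{L}}\boldsymbol{\mathcal{V}}^T$, where $\hat{\boldsymbol{\mathcal{S}}}$ is f-diagonal with $\hat{\boldsymbol{\mathcal{S}}}^{<j>}(i,i)=\mathrm{GST}\big(\mathfrak{L}(\boldsymbol{\mathcal{S}})^{<j>}(i,i),\tau w_{i,j},p\big)$ for $i\le\min(m_1,m_2)$; $\boldsymbol{\mathcal{W}}$ denotes the f-diagonal weight tensor with $\boldsymbol{\mathcal{W}}^{<j>}(i,i)=w_{i,j}$, the same weights being used regardless of the first two dimensions of the argument. *)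

theory Defs
  imports Complex_Main
begin

text \<open>A tensor of size m1 x m2 x n3 x ... x nd is a function
  (i1, i2, is) \<mapsto> entry, with 0-based indices i1 < m1, i2 < m2 and the list is = [i3,...,id]
  (0-based, length d-2, is!a < ns!a where ns = [n3,...,nd]); entries outside
  the index range are required to be 0 (predicate is_tensor) and all operations
  below produce such tensors.  Matrices are functions nat => nat => complex (0-based).
  The transform is given by Us a (the matrix U_{n_(a+3)}) and al a (its alpha).\<close>

type_synonym tensor = "nat \<Rightarrow> nat \<Rightarrow> nat list \<Rightarrow> complex"
type_synonym cmat = "nat \<Rightarrow> nat \<Rightarrow> complex"

definition valid_idx :: "nat list \<Rightarrow> nat list \<Rightarrow> bool" where
  "valid_idx ns is \<longleftrightarrow> length is = length ns \<and> (\<forall>a<length ns. is ! a < ns ! a)"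

definition in_range :: "nat \<Rightarrow> nat \<Rightarrow> nat list \<Rightarrow> nat \<Rightarrow> nat \<Rightarrow> nat list \<Rightarrow> bool" where
  "in_range m1 m2 ns i1 i2 is \<longleftrightarrow> i1 < m1 \<and> i2 < m2 \<and> valid_idx ns is"

definition is_tensor :: "nat \<Rightarrow> nat \<Rightarrow> nat list \<Rightarrow> tensor \<Rightarrow> bool" where
  "is_tensor m1 m2 ns A \<longleftrightarrow> (\<forall>i1 i2 is. \<not> in_range m1 m2 ns i1 i2 is \<longrightarrow> A i1 i2 is = 0)"

definition real_tensor :: "tensor \<Rightarrow> bool" where
  "real_tensor A \<longleftrightarrow> (\<forall>i1 i2 is. A i1 i2 is \<in> \<real>)"

text \<open>Linear index j (1-based) of the frontal slice with 0-based index list is.\<close>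
definition lin_idx :: "nat list \<Rightarrow> nat list \<Rightarrow> nat" where
  "lin_idx ns is = 1 + (\<Sum>a<length ns. is ! a * (\<Prod>b<a. ns ! b))"

text \<open>Mode-(a+3) product: B = A x_(a+3) M iff B_(a+3) = M A_(a+3).\<close>
definition mode_prod :: "nat \<Rightarrow> nat \<Rightarrow> nat list \<Rightarrow> nat \<Rightarrow> cmat \<Rightarrow> tensor \<Rightarrow> tensor" where
  "mode_prod m1 m2 ns a M A = (\<lambda>i1 i2 is. if in_range m1 m2 ns i1 i2 is
      then (\<Sum>j<ns ! a. M (is ! a) j * A i1 i2 (is[a := j])) else 0)"

definition is_transform :: "nat list \<Rightarrow> (nat \<Rightarrow> cmat) \<Rightarrow> (nat \<Rightarrow> real) \<Rightarrow> bool" where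
  "is_transform ns Us al \<longleftrightarrow> (\<forall>a<length ns. al a > 0 \<and>
     (\<forall>r<ns ! a. \<forall>c<ns ! a.
        (\<Sum>l<ns ! a. Us a r l * cnj (Us a c l)) = (if r = c then of_real (al a) else 0) \<and>
        (\<Sum>l<ns ! a. cnj (Us a l r) * Us a l c) = (if r = c then of_real (al a) else 0)))"

definition Ltr :: "nat \<Rightarrow> nat \<Rightarrow> nat list \<Rightarrow> (nat \<Rightarrow> cmat) \<Rightarrow> tensor \<Rightarrow> tensor" where
  "Ltr m1 m2 ns Us A = fold (\<lambda>a X. mode_prod m1 m2 ns a (Us a) X) [0..<length ns] A"

text \<open>Inverse transform: mode products with U_{n_i}^{-1} = U_{n_i}^H / alpha_i, in reverse order.\<close>
definition Linv :: "nat \<Rightarrow> nat \<Rightarrow> nat list \<Rightarrow> (nat \<Rightarrow> cmat) \<Rightarrow> (nat \<Rightarrow> real) \<Rightarrow> tensor \<Rightarrow> tensor" where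
  "Linv m1 m2 ns Us al A = fold (\<lambda>a X. mode_prod m1 m2 ns a (\<lambda>r c. cnj (Us a c r) / of_real (al a)) X)
      (rev [0..<length ns]) A"

definition tprod :: "nat \<Rightarrow> nat \<Rightarrow> nat \<Rightarrow> nat list \<Rightarrow> (nat \<Rightarrow> cmat) \<Rightarrow> (nat \<Rightarrow> real) \<Rightarrow> tensor \<Rightarrow> tensor \<Rightarrow> tensor" where
  "tprod m1 r m2 ns Us al A B = Linv m1 m2 ns Us al (\<lambda>i1 i2 is. if in_range m1 m2 ns i1 i2 is
      then (\<Sum>l<r. Ltr m1 r ns Us A i1 l is * Ltr r m2 ns Us B l i2 is) else 0)"

definition ttrans :: "nat \<Rightarrow> nat \<Rightarrow> nat list \<Rightarrow> (nat \<Rightarrow> cmat) \<Rightarrow> (nat \<Rightarrow> real) \<Rightarrow> tensor \<Rightarrow> tensor" where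
  "ttrans m1 m2 ns Us al A = Linv m2 m1 ns Us al (\<lambda>i1 i2 is. if in_range m2 m1 ns i1 i2 is
      then cnj (Ltr m1 m2 ns Us A i2 i1 is) else 0)"

definition tid :: "nat \<Rightarrow> nat list \<Rightarrow> (nat \<Rightarrow> cmat) \<Rightarrow> (nat \<Rightarrow> real) \<Rightarrow> tensor" where
  "tid m ns Us al = Linv m m ns Us al (\<lambda>i1 i2 is. if in_range m m ns i1 i2 is \<and> i1 = i2 then 1 else 0)"

definition part_orth :: "nat \<Rightarrow> nat \<Rightarrow> nat list \<Rightarrow> (nat \<Rightarrow> cmat) \<Rightarrow> (nat \<Rightarrow> real) \<Rightarrow> tensor \<Rightarrow> bool" where
  "part_orth m k ns Us al Q \<longleftrightarrow> tprod k m k ns Us al (ttrans m k ns Us al Q) Q = tid k ns Us al"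

definition orth :: "nat \<Rightarrow> nat list \<Rightarrow> (nat \<Rightarrow> cmat) \<Rightarrow> (nat \<Rightarrow> real) \<Rightarrow> tensor \<Rightarrow> bool" where
  "orth m ns Us al Q \<longleftrightarrow> part_orth m m ns Us al Q \<and>
     tprod m m m ns Us al Q (ttrans m m ns Us al Q) = tid m ns Us al"

definition f_diag :: "tensor \<Rightarrow> bool" where
  "f_diag A \<longleftrightarrow> (\<forall>i1 i2 is. i1 \<noteq> i2 \<longrightarrow> A i1 i2 is = 0)"

definition is_TSVD :: "nat \<Rightarrow> nat \<Rightarrow> nat list \<Rightarrow> (nat \<Rightarrow> cmat) \<Rightarrow> (nat \<Rightarrow> real) \<Rightarrow>
    tensor \<Rightarrow> tensor \<Rightarrow> tensor \<Rightarrow> tensor \<Rightarrow> bool" where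
  "is_TSVD m1 m2 ns Us al A U S V \<longleftrightarrow>
     is_tensor m1 m1 ns U \<and> is_tensor m1 m2 ns S \<and> is_tensor m2 m2 ns V \<and>
     orth m1 ns Us al U \<and> orth m2 ns Us al V \<and> f_diag S \<and>
     A = tprod m1 m2 m2 ns Us al (tprod m1 m1 m2 ns Us al U S) (ttrans m2 m2 ns Us al V) \<and>
     (\<forall>is. valid_idx ns is \<longrightarrow>
        (\<forall>i<min m1 m2. Ltr m1 m2 ns Us S i i is \<in> \<real> \<and> 0 \<le> Re (Ltr m1 m2 ns Us S i i is)) \<and>
        (\<forall>i. Suc i < min m1 m2 \<longrightarrow>
           Re (Ltr m1 m2 ns Us S (Suc i) (Suc i) is) \<le> Re (Ltr m1 m2 ns Us S i i is)))"

definition gst_delta :: "real \<Rightarrow> real \<Rightarrow> real" where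
  "gst_delta w p = (2 * w * (1 - p)) powr (1 / (2 - p))
      + w * p * (2 * w * (1 - p)) powr ((p - 1) / (2 - p))"

definition GST :: "real \<Rightarrow> real \<Rightarrow> real \<Rightarrow> real" where
  "GST s w p = (if w = 0 then s
     else if \<bar>s\<bar> \<le> gst_delta w p then 0
     else sgn s * (GREATEST a. a > 0 \<and> a + w * p * a powr (p - 1) = \<bar>s\<bar>))"

text \<open>X is a value of the GTSVT D_{W,p,tau}(A) for the m1 x m2 tensor A, computed from
  some T-SVD of A; weights w i j (i = 1..min(m1,m2), j = 1..N, 1-based).\<close>
definition is_gtsvt :: "nat \<Rightarrow> nat \<Rightarrow> nat list \<Rightarrow> (nat \<Rightarrow> cmat) \<Rightarrow> (nat \<Rightarrow> real) \<Rightarrow>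
    (nat \<Rightarrow> nat \<Rightarrow> real) \<Rightarrow> real \<Rightarrow> real \<Rightarrow> tensor \<Rightarrow> tensor \<Rightarrow> bool" where
  "is_gtsvt m1 m2 ns Us al w p tau A X \<longleftrightarrow> (\<exists>U S V. is_TSVD m1 m2 ns Us al A U S V \<and>
     X = tprod m1 m2 m2 ns Us al
           (tprod m1 m1 m2 ns Us al U
              (Linv m1 m2 ns Us al (\<lambda>i1 i2 is. if in_range m1 m2 ns i1 i2 is \<and> i1 = i2
                 then complex_of_real (GST (Re (Ltr m1 m2 ns Us S i1 i1 is))
                                           (tau * w (Suc i1) (lin_idx ns is)) p)
                 else 0)))
           (ttrans m2 m2 ns Us al V))"

end

theory Submission
  imports Defs
begin

text \<open>Everything happens slice by slice in the transformed domain, where the t-product is the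
  matrix product, the transpose is the conjugate transpose, and partially orthogonal tensors have
  slices with orthonormal columns.  There \<open>A = Q\<^sub>1 B Q\<^sub>2\<^sup>H\<close>.  An SVD
  \<open>B = U' \<Sigma> V'\<^sup>H\<close> yields one of \<open>A\<close> by completing the orthonormal columns of
  \<open>Q\<^sub>1 U'\<close> and \<open>Q\<^sub>2 V'\<close> to unitary matrices and padding \<open>\<Sigma>\<close> with zeros.
  Conversely, in an SVD \<open>A = U \<Sigma> V\<^sup>H\<close> the singular vectors of the nonzero singular
  values lie in the ranges of \<open>Q\<^sub>1\<close> and \<open>Q\<^sub>2\<close>; their coordinates
  \<open>Q\<^sub>1\<^sup>H U\<close>, \<open>Q\<^sub>2\<^sup>H V\<close> are orthonormal and complete to an SVD of \<open>B\<close>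
  with the same singular values.  In both directions
  \<open>U diag(d) V\<^sup>H = Q\<^sub>1 (U' diag(d) V'\<^sup>H) Q\<^sub>2\<^sup>H\<close> for every diagonal \<open>d\<close>
  vanishing where the singular values do, and the thresholded singular values form such a \<open>d\<close>
  because GST maps 0 to 0.\<close>

section \<open>Orthonormal columns and unitary completion\<close>

definition orthonormal_cols :: "nat \<Rightarrow> nat \<Rightarrow> cmat \<Rightarrow> bool" where
  "orthonormal_cols m r M \<longleftrightarrow>
     (\<forall>i<r. \<forall>j<r. (\<Sum>l<m. cnj (M l i) * M l j) = (if i = j then 1 else 0))"

definition orthonormal_rows :: "nat \<Rightarrow> nat \<Rightarrow> cmat \<Rightarrow> bool" where
  "orthonormal_rows m r M \<longleftrightarrow>
     (\<forall>i<r. \<forall>j<r. (\<Sum>l<m. M i l * cnj (M j l)) = (if i = j then 1 else 0))"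

definition unitary_mat :: "nat \<Rightarrow> cmat \<Rightarrow> bool" where
  "unitary_mat m M \<longleftrightarrow> orthonormal_cols m m M \<and> orthonormal_rows m m M"

definition col_inner :: "nat \<Rightarrow> cmat \<Rightarrow> (nat \<Rightarrow> complex) \<Rightarrow> nat \<Rightarrow> complex" where
  "col_inner m X e i = (\<Sum>j<m. cnj (X j i) * e j)"

definition proj_residual :: "nat \<Rightarrow> nat \<Rightarrow> cmat \<Rightarrow> (nat \<Rightarrow> complex) \<Rightarrow> nat \<Rightarrow> complex" where
  "proj_residual m r X e j = e j - (\<Sum>i<r. col_inner m X e i * X j i)"

lemma sum_cnj_mult_self: "(\<Sum>j\<in>A. cnj (f j) * f j) = complex_of_real (\<Sum>j\<in>A. (cmod (f j))\<^sup>2)"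
  unfolding of_real_sum complex_norm_square by (simp add: mult.commute)

lemma col_inner_proj_residual:
  assumes "orthonormal_cols m r X" "a < r"
  shows "col_inner m X (proj_residual m r X e) a = 0"
proof -
  let ?c = "col_inner m X e"
  have "col_inner m X (proj_residual m r X e) a
      = ?c a - (\<Sum>j<m. \<Sum>i<r. ?c i * (cnj (X j a) * X j i))"
    unfolding col_inner_def proj_residual_def
    by (simp add: right_diff_distrib sum_subtractf sum_distrib_left mult_ac)
  also have "(\<Sum>j<m. \<Sum>i<r. ?c i * (cnj (X j a) * X j i)) = (\<Sum>i<r. ?c i * (\<Sum>j<m. cnj (X j a) * X j i))"
    by (subst sum.swap) (simp add: sum_distrib_left)
  also have "\<dots> = (\<Sum>i<r. if i = a then ?c i else 0)"
    using assms unfolding orthonormal_cols_def by (intro sum.cong) auto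
  finally show ?thesis using assms(2) by simp
qed

lemma bessel_identity:
  assumes "orthonormal_cols m r X"
  shows "(\<Sum>i<r. (cmod (col_inner m X e i))\<^sup>2) + (\<Sum>j<m. (cmod (proj_residual m r X e j))\<^sup>2)
    = (\<Sum>j<m. (cmod (e j))\<^sup>2)"
proof -
  define c where "c = col_inner m X e"
  define y where "y = proj_residual m r X e"
  have y_eq: "y j = e j - (\<Sum>i<r. c i * X j i)" for j
    by (simp add: y_def c_def proj_residual_def)
  have y_orth: "(\<Sum>j<m. cnj (y j) * X j a) = 0" if "a < r" for a
  proof -
    have "(\<Sum>j<m. cnj (y j) * X j a) = cnj (col_inner m X y a)"
      by (simp add: col_inner_def mult.commute)
    then show ?thesis using col_inner_proj_residual[OF assms that] by (simp add: y_def)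
  qed
  have "(\<Sum>j<m. cnj (y j) * y j) = (\<Sum>j<m. cnj (y j) * e j - (\<Sum>i<r. c i * (cnj (y j) * X j i)))"
  proof (intro sum.cong refl)
    fix j
    have "cnj (y j) * y j = cnj (y j) * (e j - (\<Sum>i<r. c i * X j i))" by (simp only: y_eq)
    then show "cnj (y j) * y j = cnj (y j) * e j - (\<Sum>i<r. c i * (cnj (y j) * X j i))"
      by (simp add: right_diff_distrib sum_distrib_left mult.left_commute)
  qed
  also have "\<dots> = (\<Sum>j<m. cnj (y j) * e j) - (\<Sum>i<r. c i * (\<Sum>j<m. cnj (y j) * X j i))"
    by (simp add: sum_subtractf sum_distrib_left) (subst sum.swap, rule refl)
  also have "(\<Sum>i<r. c i * (\<Sum>j<m. cnj (y j) * X j i)) = 0"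
    using y_orth by simp
  also have "(\<Sum>j<m. cnj (y j) * e j) = (\<Sum>j<m. cnj (e j) * e j - (\<Sum>i<r. cnj (c i) * (cnj (X j i) * e j)))"
    by (intro sum.cong refl) (simp add: y_eq left_diff_distrib sum_distrib_right mult.assoc)
  also have "\<dots> = (\<Sum>j<m. cnj (e j) * e j) - (\<Sum>i<r. cnj (c i) * c i)"
    by (simp add: sum_subtractf c_def col_inner_def sum_distrib_left) (subst sum.swap, rule refl)
  finally have "complex_of_real (\<Sum>j<m. (cmod (y j))\<^sup>2)
      = of_real (\<Sum>j<m. (cmod (e j))\<^sup>2) - of_real (\<Sum>i<r. (cmod (c i))\<^sup>2)"
    by (simp only: sum_cnj_mult_self diff_0_right)
  then have "(\<Sum>j<m. (cmod (y j))\<^sup>2) = (\<Sum>j<m. (cmod (e j))\<^sup>2) - (\<Sum>i<r. (cmod (c i))\<^sup>2)"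
    by (metis of_real_diff of_real_eq_iff)
  then show ?thesis by (simp add: c_def y_def)
qed

lemma bessel_unit_vector:
  assumes "orthonormal_cols m r X" "j < m"
  shows "(\<Sum>i<r. (cmod (X j i))\<^sup>2)
      + (\<Sum>l<m. (cmod (proj_residual m r X (\<lambda>l. if l = j then 1 else 0) l))\<^sup>2) = 1"
proof -
  have "col_inner m X (\<lambda>l. if l = j then 1 else 0) i = cnj (X j i)" for i
    using assms(2) by (simp add: col_inner_def if_distrib cong: if_cong)
  moreover have "(\<Sum>l<m. (cmod (if l = j then 1 else 0 :: complex))\<^sup>2) = (\<Sum>l<m. if l = j then 1 else 0)"
    by (intro sum.cong) auto
  ultimately show ?thesis
    using bessel_identity[OF assms(1), of "\<lambda>l. if l = j then 1 else 0"] assms(2) by simp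
qed

lemma orthonormal_cols_row_norm_le:
  assumes "orthonormal_cols m r X" "j < m"
  shows "(\<Sum>i<r. (cmod (X j i))\<^sup>2) \<le> 1"
proof -
  have "0 \<le> (\<Sum>l<m. (cmod (proj_residual m r X (\<lambda>l. if l = j then 1 else 0) l))\<^sup>2)"
    by (intro sum_nonneg) simp
  then show ?thesis using bessel_unit_vector[OF assms] by linarith
qed

lemma orthonormal_cols_sum_norms:
  assumes "orthonormal_cols m r X"
  shows "(\<Sum>j<m. \<Sum>i<r. (cmod (X j i))\<^sup>2) = real r"
proof -
  have "(\<Sum>j<m. cnj (X j i) * X j i) = 1" if "i < r" for i
    using assms that unfolding orthonormal_cols_def by auto
  then have "(\<Sum>j<m. (cmod (X j i))\<^sup>2) = 1" if "i < r" for i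
    using that unfolding sum_cnj_mult_self by (metis of_real_eq_1_iff)
  then have "(\<Sum>i<r. \<Sum>j<m. (cmod (X j i))\<^sup>2) = (\<Sum>i<r. 1)"
    by (intro sum.cong) auto
  then show ?thesis by (subst sum.swap) simp
qed

lemma orthonormal_cols_le:
  assumes "orthonormal_cols m r X"
  shows "r \<le> m"
proof -
  have "real r = (\<Sum>j<m. \<Sum>i<r. (cmod (X j i))\<^sup>2)"
    using orthonormal_cols_sum_norms[OF assms] by simp
  also have "\<dots> \<le> (\<Sum>j<m. 1)"
    using orthonormal_cols_row_norm_le[OF assms] by (intro sum_mono) simp
  finally show ?thesis by simp
qed

lemma orthonormal_cols_mono:
  "orthonormal_cols m r' M \<Longrightarrow> r \<le> r' \<Longrightarrow> orthonormal_cols m r M"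
  unfolding orthonormal_cols_def by simp

lemma orthonormal_cols_exists_orthogonal_unit:
  assumes "orthonormal_cols m r X" "r < m"
  shows "\<exists>z. (\<forall>a<r. col_inner m X z a = 0) \<and> (\<Sum>j<m. cnj (z j) * z j) = 1"
proof -
  have "\<exists>j<m. (\<Sum>i<r. (cmod (X j i))\<^sup>2) < 1"
  proof (rule ccontr)
    assume "\<not> ?thesis"
    then have "(\<Sum>j<m. 1) \<le> (\<Sum>j<m. \<Sum>i<r. (cmod (X j i))\<^sup>2)"
      by (intro sum_mono) (meson lessThan_iff not_le)
    then show False using orthonormal_cols_sum_norms[OF assms(1)] assms(2) by simp
  qed
  then obtain j where j: "j < m" "(\<Sum>i<r. (cmod (X j i))\<^sup>2) < 1" by blast
  define y where "y = proj_residual m r X (\<lambda>l. if l = j then 1 else 0)"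
  define n where "n = sqrt (\<Sum>l<m. (cmod (y l))\<^sup>2)"
  have "0 < (\<Sum>l<m. (cmod (y l))\<^sup>2)"
    using bessel_unit_vector[OF assms(1) j(1)] j(2) unfolding y_def by linarith
  then have n: "0 < n" "n\<^sup>2 = (\<Sum>l<m. (cmod (y l))\<^sup>2)" by (auto simp: n_def)
  show ?thesis
  proof (intro exI conjI allI impI)
    fix a assume "a < r"
    then show "col_inner m X (\<lambda>l. y l / of_real n) a = 0"
      using col_inner_proj_residual[OF assms(1)]
      by (simp add: y_def col_inner_def sum_divide_distrib[symmetric])
  next
    have "(\<Sum>l<m. cnj (y l / of_real n) * (y l / of_real n)) = (\<Sum>l<m. cnj (y l) * y l) / of_real (n\<^sup>2)"
      by (simp add: sum_divide_distrib power2_eq_square)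
    also have "(\<Sum>l<m. cnj (y l) * y l) = of_real (n\<^sup>2)"
      unfolding sum_cnj_mult_self n(2) ..
    finally show "(\<Sum>l<m. cnj (y l / of_real n) * (y l / of_real n)) = 1"
      using n(1) by simp
  qed
qed

lemma orthonormal_cols_add_col:
  assumes "orthonormal_cols m r X" "\<forall>a<r. col_inner m X z a = 0" "(\<Sum>j<m. cnj (z j) * z j) = 1"
  shows "orthonormal_cols m (Suc r) (\<lambda>i l. if l = r then z i else X i l)"
  unfolding orthonormal_cols_def
proof (intro allI impI)
  fix a b assume ab: "a < Suc r" "b < Suc r"
  have z_orth: "(\<Sum>l<m. cnj (X l c) * z l) = 0" "(\<Sum>l<m. cnj (z l) * X l c) = 0" if "c < r" for c
  proof -
    show "(\<Sum>l<m. cnj (X l c) * z l) = 0" using assms(2) that by (simp add: col_inner_def)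
    moreover have "(\<Sum>l<m. cnj (z l) * X l c) = cnj (\<Sum>l<m. cnj (X l c) * z l)"
      by (simp add: mult.commute)
    ultimately show "(\<Sum>l<m. cnj (z l) * X l c) = 0" by simp
  qed
  show "(\<Sum>l<m. cnj ((if a = r then z l else X l a)) * (if b = r then z l else X l b))
      = (if a = b then 1 else 0)"
    using assms(1,3) ab z_orth unfolding orthonormal_cols_def by (cases "a = r"; cases "b = r") auto
qed

lemma orthonormal_cols_extend:
  assumes "orthonormal_cols m r X"
  shows "\<exists>M. orthonormal_cols m m M \<and> (\<forall>i l. l < r \<longrightarrow> M i l = X i l)"
  using assms
proof (induction "m - r" arbitrary: r X)
  case 0
  then have "r = m" using orthonormal_cols_le by (simp add: le_antisym)
  then show ?case using 0 by blast
next
  case (Suc d)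
  then have "r < m" by simp
  then obtain z where z: "\<forall>a<r. col_inner m X z a = 0" "(\<Sum>j<m. cnj (z j) * z j) = 1"
    using orthonormal_cols_exists_orthogonal_unit[OF Suc.prems] by blast
  obtain M where "orthonormal_cols m m M"
      "\<forall>i l. l < Suc r \<longrightarrow> M i l = (if l = r then z i else X i l)"
    using Suc.hyps(1)[of "Suc r"] Suc.hyps(2) orthonormal_cols_add_col[OF Suc.prems z] by force
  then show ?case by (intro exI[of _ M]) auto
qed

lemma orthonormal_cols_square_rows:
  assumes "orthonormal_cols m m M"
  shows "orthonormal_rows m m M"
  unfolding orthonormal_rows_def
proof (intro allI impI)
  fix i j assume ij: "i < m" "j < m"
  let ?row = "\<lambda>j. \<Sum>t<m. (cmod (M j t))\<^sup>2"
  have "(\<Sum>j<m. 1 - ?row j) = 0"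
    using orthonormal_cols_sum_norms[OF assms] by (simp add: sum_subtractf)
  then have "\<forall>j\<in>{..<m}. 1 - ?row j = 0"
    using orthonormal_cols_row_norm_le[OF assms] by (subst sum_nonneg_eq_0_iff[symmetric]) auto
  then have "(\<Sum>l<m. (cmod (proj_residual m m M (\<lambda>l. if l = j then 1 else 0) l))\<^sup>2) = 0"
    using bessel_unit_vector[OF assms ij(2)] ij(2) by simp
  then have "proj_residual m m M (\<lambda>l. if l = j then 1 else 0) i = 0"
    using ij(1) by (subst (asm) sum_nonneg_eq_0_iff) auto
  moreover have "col_inner m M (\<lambda>l. if l = j then 1 else 0) t = cnj (M j t)" for t
    using ij(2) by (simp add: col_inner_def if_distrib cong: if_cong)
  ultimately show "(\<Sum>l<m. M i l * cnj (M j l)) = (if i = j then 1 else 0)"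
    by (simp add: proj_residual_def mult.commute)
qed

lemma orthonormal_cols_extend_unitary:
  assumes "orthonormal_cols m r X"
  shows "\<exists>M. unitary_mat m M \<and> (\<forall>i l. l < r \<longrightarrow> M i l = X i l)"
  using orthonormal_cols_extend[OF assms] orthonormal_cols_square_rows unfolding unitary_mat_def by blast

lemma unitary_mat_cong:
  assumes "\<And>i j. i < m \<Longrightarrow> j < m \<Longrightarrow> M i j = M' i j"
  shows "unitary_mat m M \<longleftrightarrow> unitary_mat m M'"
proof -
  have "(\<Sum>l<m. cnj (M l i) * M l j) = (\<Sum>l<m. cnj (M' l i) * M' l j)"
    "(\<Sum>l<m. M i l * cnj (M j l)) = (\<Sum>l<m. M' i l * cnj (M' j l))" if "i < m" "j < m" for i j
    using assms that by (auto intro!: sum.cong)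
  then show ?thesis unfolding unitary_mat_def orthonormal_cols_def orthonormal_rows_def by auto
qed

section \<open>Singular value decompositions of sandwiched matrices\<close>

definition mat_mult :: "nat \<Rightarrow> cmat \<Rightarrow> cmat \<Rightarrow> cmat" where
  "mat_mult r M N = (\<lambda>i j. \<Sum>l<r. M i l * N l j)"

definition adj_mult :: "nat \<Rightarrow> cmat \<Rightarrow> cmat \<Rightarrow> cmat" where
  "adj_mult r M N = (\<lambda>i j. \<Sum>l<r. cnj (M l i) * N l j)"

definition svd_compose :: "nat \<Rightarrow> cmat \<Rightarrow> (nat \<Rightarrow> complex) \<Rightarrow> cmat \<Rightarrow> cmat" where
  "svd_compose r U d V = (\<lambda>i j. \<Sum>l<r. U i l * d l * cnj (V j l))"

definition mat_sandwich :: "nat \<Rightarrow> nat \<Rightarrow> cmat \<Rightarrow> cmat \<Rightarrow> cmat \<Rightarrow> cmat" where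
  "mat_sandwich r1 r2 P M Q = (\<lambda>i j. \<Sum>l<r2. mat_mult r1 P M i l * cnj (Q j l))"

definition is_svd :: "nat \<Rightarrow> nat \<Rightarrow> cmat \<Rightarrow> cmat \<Rightarrow> (nat \<Rightarrow> real) \<Rightarrow> cmat \<Rightarrow> bool" where
  "is_svd m1 m2 A U s V \<longleftrightarrow> unitary_mat m1 U \<and> unitary_mat m2 V \<and>
     (\<forall>l<min m1 m2. 0 \<le> s l) \<and> (\<forall>l. Suc l < min m1 m2 \<longrightarrow> s (Suc l) \<le> s l) \<and>
     (\<forall>i<m1. \<forall>j<m2. A i j = svd_compose (min m1 m2) U (\<lambda>l. of_real (s l)) V i j)"

lemma orthonormal_cols_adj_mult_mult:
  assumes "orthonormal_cols n k Q" "a < k"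
  shows "adj_mult n Q (mat_mult k Q Z) a j = Z a j"
proof -
  have "adj_mult n Q (mat_mult k Q Z) a j = (\<Sum>b<k. (\<Sum>i<n. cnj (Q i a) * Q i b) * Z b j)"
    unfolding adj_mult_def mat_mult_def
    by (simp add: sum_distrib_left sum_distrib_right mult.assoc) (subst sum.swap, rule refl)
  also have "\<dots> = (\<Sum>b<k. if a = b then Z b j else 0)"
    using assms unfolding orthonormal_cols_def by (intro sum.cong) auto
  finally show ?thesis using assms(2) by simp
qed

lemma orthonormal_cols_isometry:
  assumes "orthonormal_cols n k Q"
  shows "adj_mult n (mat_mult k Q X) (mat_mult k Q Y) i j = adj_mult k X Y i j"
proof -
  have "adj_mult n (mat_mult k Q X) (mat_mult k Q Y) i j
      = (\<Sum>a<k. cnj (X a i) * adj_mult n Q (mat_mult k Q Y) a j)"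
    unfolding adj_mult_def mat_mult_def[of k Q X]
    by (simp add: sum_distrib_left sum_distrib_right mult_ac) (subst sum.swap, rule refl)
  then show ?thesis
    using orthonormal_cols_adj_mult_mult[OF assms] by (simp add: adj_mult_def)
qed

lemma orthonormal_cols_mat_mult:
  assumes "orthonormal_cols n k Q" "orthonormal_cols k r W"
  shows "orthonormal_cols n r (mat_mult k Q W)"
  using assms orthonormal_cols_isometry[OF assms(1), of W W]
  unfolding orthonormal_cols_def adj_mult_def by simp

lemma mat_sandwich_svd_compose:
  "mat_sandwich k k P (svd_compose k U d V) Q i j = svd_compose k (mat_mult k P U) d (mat_mult k Q V) i j"
proof -
  have "svd_compose k (mat_mult k P U) d (mat_mult k Q V) i j
      = (\<Sum>l<k. \<Sum>a<k. \<Sum>b<k. P i a * U a l * d l * cnj (V b l) * cnj (Q j b))"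
    unfolding svd_compose_def mat_mult_def by (simp add: sum_distrib_left sum_distrib_right mult_ac)
  also have "\<dots> = (\<Sum>a<k. \<Sum>l<k. \<Sum>b<k. P i a * U a l * d l * cnj (V b l) * cnj (Q j b))"
    by (rule sum.swap)
  also have "\<dots> = (\<Sum>a<k. \<Sum>b<k. \<Sum>l<k. P i a * U a l * d l * cnj (V b l) * cnj (Q j b))"
    by (intro sum.cong refl sum.swap)
  also have "\<dots> = (\<Sum>b<k. \<Sum>a<k. \<Sum>l<k. P i a * U a l * d l * cnj (V b l) * cnj (Q j b))"
    by (rule sum.swap)
  also have "\<dots> = mat_sandwich k k P (svd_compose k U d V) Q i j"
    unfolding mat_sandwich_def mat_mult_def svd_compose_def
    by (simp add: sum_distrib_left sum_distrib_right mult_ac)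
  finally show ?thesis by (rule sym)
qed

lemma svd_compose_truncate:
  assumes "r \<le> m" "\<And>l. r \<le> l \<Longrightarrow> l < m \<Longrightarrow> d l = 0"
  shows "svd_compose m U d V i j = svd_compose r U d V i j"
  unfolding svd_compose_def using assms by (intro sum.mono_neutral_right) auto

lemma svd_compose_cong:
  assumes "\<And>l. l < r \<Longrightarrow> U i l = U' i l" "\<And>l. l < r \<Longrightarrow> d l = d' l" "\<And>l. l < r \<Longrightarrow> V j l = V' j l"
  shows "svd_compose r U d V i j = svd_compose r U' d' V' i j"
  unfolding svd_compose_def using assms by (intro sum.cong) auto

lemma mat_sandwich_cong:
  assumes "\<And>a b. a < r1 \<Longrightarrow> b < r2 \<Longrightarrow> M a b = M' a b"
  shows "mat_sandwich r1 r2 P M Q i j = mat_sandwich r1 r2 P M' Q i j"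
  unfolding mat_sandwich_def mat_mult_def using assms by (auto intro!: sum.cong)

lemma mat_sandwich_diag:
  assumes "\<And>a b. a \<noteq> b \<Longrightarrow> D a b = 0"
  shows "mat_sandwich r1 r2 U D V i j = svd_compose (min r1 r2) U (\<lambda>l. D l l) V i j"
proof -
  have "mat_mult r1 U D i l = (\<Sum>a<r1. if a = l then U i l * D l l else 0)" for l
    unfolding mat_mult_def using assms by (intro sum.cong) auto
  then have "mat_mult r1 U D i l = (if l < r1 then U i l * D l l else 0)" for l
    by simp
  then have "mat_sandwich r1 r2 U D V i j = (\<Sum>l<r2. if l < r1 then U i l * D l l * cnj (V j l) else 0)"
    unfolding mat_sandwich_def by (intro sum.cong) auto
  also have "\<dots> = (\<Sum>l\<in>{..<r2} \<inter> {..<r1}. U i l * D l l * cnj (V j l))"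
    by (simp add: sum.inter_restrict)
  finally show ?thesis by (simp add: svd_compose_def greaterThan_Int_greaterThan min.commute)
qed

lemma mat_sandwich_assoc:
  "mat_sandwich k k P M Q i j = mat_mult k P (\<lambda>a j. \<Sum>l<k. M a l * cnj (Q j l)) i j"
  unfolding mat_sandwich_def mat_mult_def
  by (simp add: sum_distrib_left sum_distrib_right mult.assoc) (subst sum.swap, rule refl)

lemma cnj_mat_sandwich:
  "cnj (mat_sandwich k k P M Q i j) = mat_mult k Q (\<lambda>a i. cnj (mat_mult k P M i a)) j i"
  unfolding mat_sandwich_def mat_mult_def[of k Q] by (simp add: mult.commute)

lemma cnj_svd_compose:
  "cnj (svd_compose m U d V i j) = svd_compose m V (\<lambda>l. cnj (d l)) U j i"
  unfolding svd_compose_def by (simp add: mult_ac)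

lemma mat_sandwich_cancel:
  assumes P: "orthonormal_cols n1 k P" and Q: "orthonormal_cols n2 k Q"
    and eq: "\<forall>i<n1. \<forall>j<n2. mat_sandwich k k P M Q i j = mat_sandwich k k P M' Q i j"
    and "a < k" "b < k"
  shows "M a b = M' a b"
proof -
  have recover: "adj_mult n1 P (\<lambda>i b. \<Sum>j<n2. mat_sandwich k k P N Q i j * Q j b) a b = N a b" for N
  proof -
    have "(\<Sum>j<n2. mat_sandwich k k P N Q i j * Q j b) = (\<Sum>l<k. mat_mult k P N i l * adj_mult n2 Q Q l b)" for i
      unfolding mat_sandwich_def adj_mult_def
      by (simp add: sum_distrib_left sum_distrib_right mult_ac) (subst sum.swap, rule refl)
    also have "\<dots> i = (\<Sum>l<k. if l = b then mat_mult k P N i b else 0)" for i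
      using Q \<open>b < k\<close> unfolding orthonormal_cols_def adj_mult_def by (intro sum.cong) auto
    also have "\<dots> i = mat_mult k P N i b" for i
      using \<open>b < k\<close> by simp
    finally show ?thesis
      using orthonormal_cols_adj_mult_mult[OF P \<open>a < k\<close>] by (simp add: adj_mult_def)
  qed
  have "adj_mult n1 P (\<lambda>i b. \<Sum>j<n2. mat_sandwich k k P M Q i j * Q j b) a b
      = adj_mult n1 P (\<lambda>i b. \<Sum>j<n2. mat_sandwich k k P M' Q i j * Q j b) a b"
    using eq unfolding adj_mult_def by (auto intro!: sum.cong)
  then show ?thesis unfolding recover .
qed

lemma svd_col_in_range:
  assumes V: "orthonormal_cols q q V" and "m \<le> q" "l < m" "d l \<noteq> 0"
    and Q: "orthonormal_cols p k Q"
    and A: "\<forall>i<p. \<forall>j<q. svd_compose m U d V i j = mat_mult k Q W i j"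
  shows "\<forall>i<p. U i l = mat_mult k Q (adj_mult p Q U) i l"
proof -
  \<comment> \<open>\<open>A V\<^sub>l = d\<^sub>l U\<^sub>l\<close> and \<open>A = Q W\<close>, so \<open>U\<^sub>l = Q Z\<^sub>l\<close>\<close>
  define Z where "Z = (\<lambda>a c. mat_mult q W V a c / d c)"
  have U_eq: "U i l = mat_mult k Q Z i l" if "i < p" for i
  proof -
    have "(\<Sum>j<q. svd_compose m U d V i j * V j l) = (\<Sum>c<m. U i c * d c * adj_mult q V V c l)"
      unfolding svd_compose_def adj_mult_def
      by (simp add: sum_distrib_left sum_distrib_right mult_ac) (subst sum.swap, rule refl)
    also have "\<dots> = U i l * d l"
      using V assms(2,3) unfolding orthonormal_cols_def adj_mult_def
      by (simp add: if_distrib[of "\<lambda>x. U i _ * d _ * x"] cong: if_cong)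
    finally have "U i l * d l = (\<Sum>j<q. mat_mult k Q W i j * V j l)" using A that by simp
    also have "\<dots> = mat_mult k Q (mat_mult q W V) i l"
      unfolding mat_mult_def
      by (simp add: sum_distrib_left sum_distrib_right mult_ac) (subst sum.swap, rule refl)
    finally show ?thesis
      using assms(4) by (simp add: Z_def mat_mult_def sum_divide_distrib[symmetric] field_simps)
  qed
  have "adj_mult p Q U a l = Z a l" if "a < k" for a
  proof -
    have "adj_mult p Q U a l = adj_mult p Q (mat_mult k Q Z) a l"
      using U_eq by (simp add: adj_mult_def)
    then show ?thesis using orthonormal_cols_adj_mult_mult[OF Q that] by simp
  qed
  then show ?thesis using U_eq by (simp add: mat_mult_def)
qed

lemma orthonormal_cols_adj_mult_of_range:
  assumes Q: "orthonormal_cols n k Q" and U: "orthonormal_cols n r U"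
    and range: "\<forall>l<r. \<forall>i<n. U i l = mat_mult k Q (adj_mult n Q U) i l"
  shows "orthonormal_cols k r (adj_mult n Q U)"
  unfolding orthonormal_cols_def
proof (intro allI impI)
  fix a b assume ab: "a < r" "b < r"
  let ?X = "adj_mult n Q U"
  have "(\<Sum>c<k. cnj (?X c a) * ?X c b) = adj_mult n (mat_mult k Q ?X) (mat_mult k Q ?X) a b"
    using orthonormal_cols_isometry[OF Q] by (simp add: adj_mult_def[of k])
  also have "\<dots> = adj_mult n U U a b"
    using range ab by (simp add: adj_mult_def[of n "mat_mult k Q ?X"] adj_mult_def[of n U U])
  finally show "(\<Sum>c<k. cnj (?X c a) * ?X c b) = (if a = b then 1 else 0)"
    using U ab by (simp add: orthonormal_cols_def adj_mult_def)
qed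

lemma sorted_nonneg_support_prefix:
  fixes s :: "nat \<Rightarrow> real"
  assumes sorted: "\<forall>l. Suc l < m \<longrightarrow> s (Suc l) \<le> s l" and nonneg: "\<forall>l<m. 0 \<le> s l"
  shows "\<exists>r\<le>m. \<forall>l<m. s l \<noteq> 0 \<longleftrightarrow> l < r"
proof -
  define r where "r = (LEAST l. m \<le> l \<or> s l = 0)"
  have "r \<le> m" unfolding r_def by (rule Least_le) simp
  moreover have "s l \<noteq> 0" if "l < r" "l < m" for l
    using not_less_Least[OF that(1)[unfolded r_def]] that(2) by auto
  moreover have "s l = 0" if "r \<le> l" "l < m" for l
  proof -
    have "s r = 0" using LeastI[of "\<lambda>l. m \<le> l \<or> s l = 0" m] that unfolding r_def by auto
    have "s l \<le> s r"
      using that(1)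
    proof (induction rule: dec_induct)
      case (step n)
      then show ?case using sorted that(2) by (meson Suc_le_eq le_less_trans order_trans)
    qed simp
    then show ?thesis using \<open>s r = 0\<close> nonneg that(2) by (simp add: order_antisym)
  qed
  ultimately show ?thesis by (meson not_le)
qed

lemma is_svd_sandwich_extend:
  assumes Q1: "orthonormal_cols n1 k Q1" and Q2: "orthonormal_cols n2 k Q2"
    and B: "is_svd k k B U' s V'"
    and A: "\<forall>i<n1. \<forall>j<n2. A i j = mat_sandwich k k Q1 B Q2 i j"
  shows "\<exists>U V. is_svd n1 n2 A U (\<lambda>l. if l < k then s l else 0) V \<and>
    (\<forall>d i j. i < n1 \<longrightarrow> j < n2 \<longrightarrow>
       svd_compose (min n1 n2) U (\<lambda>l. if l < k then d l else 0) V i j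
       = mat_sandwich k k Q1 (svd_compose k U' d V') Q2 i j)"
proof -
  have QU: "orthonormal_cols n1 k (mat_mult k Q1 U')" and QV: "orthonormal_cols n2 k (mat_mult k Q2 V')"
    using B orthonormal_cols_mat_mult[OF Q1] orthonormal_cols_mat_mult[OF Q2]
    by (auto simp: is_svd_def unitary_mat_def)
  have k: "k \<le> min n1 n2" using orthonormal_cols_le[OF Q1] orthonormal_cols_le[OF Q2] by simp
  obtain U where U: "unitary_mat n1 U" "\<forall>i l. l < k \<longrightarrow> U i l = mat_mult k Q1 U' i l"
    using orthonormal_cols_extend_unitary[OF QU] by blast
  obtain V where V: "unitary_mat n2 V" "\<forall>i l. l < k \<longrightarrow> V i l = mat_mult k Q2 V' i l"
    using orthonormal_cols_extend_unitary[OF QV] by blast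
  have sandwich: "svd_compose (min n1 n2) U (\<lambda>l. if l < k then d l else 0) V i j
      = mat_sandwich k k Q1 (svd_compose k U' d V') Q2 i j" for d i j
  proof -
    have "svd_compose (min n1 n2) U (\<lambda>l. if l < k then d l else 0) V i j
        = svd_compose k U (\<lambda>l. if l < k then d l else 0) V i j"
      using k by (intro svd_compose_truncate) auto
    also have "\<dots> = svd_compose k (mat_mult k Q1 U') d (mat_mult k Q2 V') i j"
      using U V by (intro svd_compose_cong) auto
    finally show ?thesis by (simp add: mat_sandwich_svd_compose)
  qed
  have "A i j = svd_compose (min n1 n2) U (\<lambda>l. of_real (if l < k then s l else 0)) V i j"
    if "i < n1" "j < n2" for i j
  proof -
    have "A i j = mat_sandwich k k Q1 (svd_compose k U' (\<lambda>l. of_real (s l)) V') Q2 i j"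
      using A B that by (auto simp: is_svd_def intro: mat_sandwich_cong)
    moreover have "(\<lambda>l. complex_of_real (if l < k then s l else 0)) = (\<lambda>l. if l < k then of_real (s l) else 0)"
      by auto
    ultimately show ?thesis using sandwich by simp
  qed
  moreover have "\<forall>l. Suc l < min n1 n2 \<longrightarrow> (if Suc l < k then s (Suc l) else 0) \<le> (if l < k then s l else 0)"
    using B by (auto simp: is_svd_def)
  ultimately have "is_svd n1 n2 A U (\<lambda>l. if l < k then s l else 0) V"
    using U V B unfolding is_svd_def by auto
  then show ?thesis using sandwich by blast
qed

lemma svd_sandwich_factor:
  assumes Q1: "orthonormal_cols n1 k Q1" and Q2: "orthonormal_cols n2 k Q2"
    and A: "\<forall>i<n1. \<forall>j<n2. A i j = mat_sandwich k k Q1 B Q2 i j"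
    and svd: "is_svd n1 n2 A U s V"
    and r: "r \<le> min n1 n2" "\<forall>l<r. s l \<noteq> 0"
  shows "\<exists>U' V'. r \<le> k \<and> unitary_mat k U' \<and> unitary_mat k V' \<and>
     (\<forall>l<r. \<forall>i<n1. U i l = mat_mult k Q1 U' i l) \<and> (\<forall>l<r. \<forall>j<n2. V j l = mat_mult k Q2 V' j l)"
proof -
  have U: "orthonormal_cols n1 n1 U" and V: "orthonormal_cols n2 n2 V"
    using svd by (auto simp: is_svd_def unitary_mat_def)
  have "\<forall>i<n1. \<forall>j<n2. svd_compose (min n1 n2) U (\<lambda>l. of_real (s l)) V i j
      = mat_mult k Q1 (\<lambda>a j. \<Sum>l<k. B a l * cnj (Q2 j l)) i j"
    using A svd by (simp add: is_svd_def mat_sandwich_assoc)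
  then have colU: "\<forall>i<n1. U i l = mat_mult k Q1 (adj_mult n1 Q1 U) i l" if "l < r" for l
    using r that by (intro svd_col_in_range[OF V _ _ _ Q1]) auto
  have "\<forall>j<n2. \<forall>i<n1. svd_compose (min n1 n2) V (\<lambda>l. of_real (s l)) U j i
      = mat_mult k Q2 (\<lambda>a i. cnj (mat_mult k Q1 B i a)) j i"
    using A svd by (simp add: is_svd_def flip: cnj_mat_sandwich) (simp add: cnj_svd_compose)
  then have colV: "\<forall>j<n2. V j l = mat_mult k Q2 (adj_mult n2 Q2 V) j l" if "l < r" for l
    using r that by (intro svd_col_in_range[OF U _ _ _ Q2]) auto
  have "orthonormal_cols k r (adj_mult n1 Q1 U)"
    using orthonormal_cols_mono[OF U] r colU by (intro orthonormal_cols_adj_mult_of_range[OF Q1]) auto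
  then obtain U' where U': "unitary_mat k U'" "\<forall>i l. l < r \<longrightarrow> U' i l = adj_mult n1 Q1 U i l"
    and "r \<le> k"
    using orthonormal_cols_extend_unitary orthonormal_cols_le by blast
  have "orthonormal_cols k r (adj_mult n2 Q2 V)"
    using orthonormal_cols_mono[OF V] r colV by (intro orthonormal_cols_adj_mult_of_range[OF Q2]) auto
  then obtain V' where V': "unitary_mat k V'" "\<forall>i l. l < r \<longrightarrow> V' i l = adj_mult n2 Q2 V i l"
    using orthonormal_cols_extend_unitary by blast
  show ?thesis
    using \<open>r \<le> k\<close> U' V' colU colV by (intro exI[of _ U'] exI[of _ V']) (simp add: mat_mult_def)
qed

lemma is_svd_sandwich_compress:
  assumes Q1: "orthonormal_cols n1 k Q1" and Q2: "orthonormal_cols n2 k Q2"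
    and A: "\<forall>i<n1. \<forall>j<n2. A i j = mat_sandwich k k Q1 B Q2 i j"
    and svd: "is_svd n1 n2 A U s V"
  shows "\<exists>U' V'. is_svd k k B U' s V' \<and>
    (\<forall>d. (\<forall>l<min n1 n2. s l = 0 \<longrightarrow> d l = 0) \<longrightarrow>
       (\<forall>i<n1. \<forall>j<n2. svd_compose (min n1 n2) U d V i j = mat_sandwich k k Q1 (svd_compose k U' d V') Q2 i j))"
proof -
  define m where "m = min n1 n2"
  have k: "k \<le> m" using orthonormal_cols_le[OF Q1] orthonormal_cols_le[OF Q2] by (simp add: m_def)
  obtain r where r: "r \<le> m" "\<forall>l<m. s l \<noteq> 0 \<longleftrightarrow> l < r"
    using sorted_nonneg_support_prefix[of m s] svd unfolding is_svd_def m_def by blast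
  then obtain U' V' where "r \<le> k" "unitary_mat k U'" "unitary_mat k V'"
    "\<forall>l<r. \<forall>i<n1. U i l = mat_mult k Q1 U' i l" "\<forall>l<r. \<forall>j<n2. V j l = mat_mult k Q2 V' j l"
    using svd_sandwich_factor[OF Q1 Q2 A svd, of r] by (auto simp: m_def)
  note UV' = this
  have factor: "svd_compose m U d V i j = mat_sandwich k k Q1 (svd_compose k U' d V') Q2 i j"
    if d: "\<forall>l<m. s l = 0 \<longrightarrow> d l = 0" and "i < n1" "j < n2" for d i j
  proof -
    have tail: "d l = 0" if "r \<le> l" "l < m" for l
      using r d that by auto
    have "svd_compose m U d V i j = svd_compose r U d V i j"
      using r(1) tail by (rule svd_compose_truncate)
    also have "\<dots> = svd_compose r (mat_mult k Q1 U') d (mat_mult k Q2 V') i j"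
      using UV' that by (intro svd_compose_cong) auto
    also have "\<dots> = svd_compose k (mat_mult k Q1 U') d (mat_mult k Q2 V') i j"
      using k \<open>r \<le> k\<close> tail by (intro svd_compose_truncate[symmetric]) auto
    finally show ?thesis by (simp add: mat_sandwich_svd_compose)
  qed
  have "\<forall>i<n1. \<forall>j<n2. mat_sandwich k k Q1 B Q2 i j
      = mat_sandwich k k Q1 (svd_compose k U' (\<lambda>l. of_real (s l)) V') Q2 i j"
    using A svd factor[of "\<lambda>l. of_real (s l)"] by (simp add: is_svd_def m_def)
  then have "\<forall>i<k. \<forall>j<k. B i j = svd_compose k U' (\<lambda>l. of_real (s l)) V' i j"
    using mat_sandwich_cancel[OF Q1 Q2] by blast
  then have "is_svd k k B U' s V'"
    using UV' svd k unfolding is_svd_def m_def by auto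
  then show ?thesis using factor unfolding m_def by blast
qed

section \<open>The transform and transformed slices of t-products\<close>

abbreviation (input) tslice :: "nat \<Rightarrow> nat \<Rightarrow> nat list \<Rightarrow> (nat \<Rightarrow> cmat) \<Rightarrow> tensor \<Rightarrow> nat list \<Rightarrow> cmat" where
  "tslice m1 m2 ns Us A is \<equiv> \<lambda>i j. Ltr m1 m2 ns Us A i j is"

abbreviation tsandwich :: "nat \<Rightarrow> nat \<Rightarrow> nat \<Rightarrow> nat \<Rightarrow> nat list \<Rightarrow> (nat \<Rightarrow> cmat) \<Rightarrow> (nat \<Rightarrow> real) \<Rightarrow>
    tensor \<Rightarrow> tensor \<Rightarrow> tensor \<Rightarrow> tensor" where
  "tsandwich m1 r1 r2 m2 ns Us al P M Q \<equiv>
     tprod m1 r2 m2 ns Us al (tprod m1 r1 r2 ns Us al P M) (ttrans m2 r2 ns Us al Q)"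

lemma is_tensor_mode_prod: "is_tensor m1 m2 ns (mode_prod m1 m2 ns a M X)"
  unfolding is_tensor_def mode_prod_def by simp

lemma is_tensor_fold_mode_prod:
  "xs \<noteq> [] \<Longrightarrow> is_tensor m1 m2 ns (fold (\<lambda>a X. mode_prod m1 m2 ns a (F a) X) xs X)"
proof (induction xs arbitrary: X)
  case (Cons x xs)
  then show ?case by (cases "xs = []") (auto simp: is_tensor_mode_prod)
qed simp

lemma is_tensor_Ltr: "ns \<noteq> [] \<Longrightarrow> is_tensor m1 m2 ns (Ltr m1 m2 ns Us X)"
  unfolding Ltr_def by (rule is_tensor_fold_mode_prod) simp

lemma is_tensor_Linv: "ns \<noteq> [] \<Longrightarrow> is_tensor m1 m2 ns (Linv m1 m2 ns Us al X)"
  unfolding Linv_def by (rule is_tensor_fold_mode_prod) simp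

lemma is_tensor_tprod: "ns \<noteq> [] \<Longrightarrow> is_tensor m1 m2 ns (tprod m1 r m2 ns Us al A B)"
  unfolding tprod_def by (rule is_tensor_Linv)

lemma mode_prod_cancel:
  assumes "a < length ns" "is_tensor m1 m2 ns X"
    and inv: "\<forall>r<ns!a. \<forall>c<ns!a. (\<Sum>j<ns!a. M' r j * M j c) = (if r = c then 1 else 0)"
  shows "mode_prod m1 m2 ns a M' (mode_prod m1 m2 ns a M X) = X"
proof (intro ext)
  fix i1 i2 "is"
  show "mode_prod m1 m2 ns a M' (mode_prod m1 m2 ns a M X) i1 i2 is = X i1 i2 is"
  proof (cases "in_range m1 m2 ns i1 i2 is")
    case False
    then show ?thesis using assms(2) unfolding mode_prod_def is_tensor_def by simp
  next
    case True
    define n where "n = ns ! a"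
    have ia: "is ! a < n" "a < length is"
      using True assms(1) unfolding in_range_def valid_idx_def n_def by auto
    have upd: "in_range m1 m2 ns i1 i2 (is[a := l])" if "l < n" for l
      using True that assms(1) unfolding in_range_def valid_idx_def n_def by (auto simp: nth_list_update)
    have "mode_prod m1 m2 ns a M' (mode_prod m1 m2 ns a M X) i1 i2 is
        = (\<Sum>j<n. M' (is!a) j * (\<Sum>l<n. M j l * X i1 i2 (is[a:=l])))"
      unfolding mode_prod_def n_def using True ia upd by (auto intro!: sum.cong simp: n_def)
    also have "\<dots> = (\<Sum>l<n. (\<Sum>j<n. M' (is!a) j * M j l) * X i1 i2 (is[a:=l]))"
      by (simp add: sum_distrib_left sum_distrib_right mult.assoc) (subst sum.swap, rule refl)
    also have "\<dots> = (\<Sum>l<n. if l = is!a then X i1 i2 (is[a:=l]) else 0)"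
      using inv ia unfolding n_def by (intro sum.cong) auto
    also have "\<dots> = X i1 i2 is" using ia by simp
    finally show ?thesis .
  qed
qed

lemma fold_foldr_cancel:
  assumes "\<And>a X. a \<in> set xs \<Longrightarrow> P X \<Longrightarrow> f a (g a X) = X" "\<And>a X. P X \<Longrightarrow> P (g a X)" "P X"
  shows "fold f xs (foldr g xs X) = X"
  using assms(1,3)
proof (induction xs arbitrary: X)
  case (Cons x xs)
  have "P (foldr g xs X)" using Cons.prems(2) by (induction xs) (use assms(2) in auto)
  then show ?case using Cons by simp
qed simp

lemma foldr_fold_cancel:
  assumes "\<And>a X. a \<in> set xs \<Longrightarrow> P X \<Longrightarrow> g a (f a X) = X" "\<And>a X. P X \<Longrightarrow> P (f a X)" "P X"
  shows "foldr g xs (fold f xs X) = X"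
  using assms(1,3)
proof (induction xs arbitrary: X)
  case (Cons x xs)
  then show ?case using assms(2) by simp
qed simp

lemma transform_inverse:
  assumes "is_transform ns Us al" "a < length ns"
  shows "\<forall>r<ns!a. \<forall>c<ns!a.
           (\<Sum>j<ns!a. Us a r j * (cnj (Us a c j) / of_real (al a))) = (if r = c then 1 else 0)"
    and "\<forall>r<ns!a. \<forall>c<ns!a.
           (\<Sum>j<ns!a. (cnj (Us a j r) / of_real (al a)) * Us a j c) = (if r = c then 1 else 0)"
proof -
  have al: "al a > 0" and h:
    "\<forall>r<ns!a. \<forall>c<ns!a. (\<Sum>l<ns ! a. Us a r l * cnj (Us a c l)) = (if r = c then of_real (al a) else 0)"
    "\<forall>r<ns!a. \<forall>c<ns!a. (\<Sum>l<ns ! a. cnj (Us a l r) * Us a l c) = (if r = c then of_real (al a) else 0)"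
    using assms unfolding is_transform_def by auto
  have "(\<Sum>j<ns!a. Us a r j * (cnj (Us a c j) / of_real (al a))) = (\<Sum>j<ns!a. Us a r j * cnj (Us a c j)) / of_real (al a)"
    "(\<Sum>j<ns!a. (cnj (Us a j r) / of_real (al a)) * Us a j c) = (\<Sum>j<ns!a. cnj (Us a j r) * Us a j c) / of_real (al a)"
    for r c by (simp_all add: sum_divide_distrib)
  then show "\<forall>r<ns!a. \<forall>c<ns!a.
           (\<Sum>j<ns!a. Us a r j * (cnj (Us a c j) / of_real (al a))) = (if r = c then 1 else 0)"
    and "\<forall>r<ns!a. \<forall>c<ns!a.
           (\<Sum>j<ns!a. (cnj (Us a j r) / of_real (al a)) * Us a j c) = (if r = c then 1 else 0)"
    using h al by simp_all
qed

lemma Ltr_Linv: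
  assumes "is_transform ns Us al" "is_tensor m1 m2 ns X"
  shows "Ltr m1 m2 ns Us (Linv m1 m2 ns Us al X) = X"
  unfolding Ltr_def Linv_def foldr_conv_fold[symmetric]
  by (rule fold_foldr_cancel[where P="is_tensor m1 m2 ns"])
    (use mode_prod_cancel transform_inverse[OF assms(1)] assms(2) in \<open>auto simp: is_tensor_mode_prod\<close>)

lemma Linv_Ltr:
  assumes "is_transform ns Us al" "is_tensor m1 m2 ns X"
  shows "Linv m1 m2 ns Us al (Ltr m1 m2 ns Us X) = X"
  unfolding Ltr_def Linv_def foldr_conv_fold[symmetric]
  by (rule foldr_fold_cancel[where P="is_tensor m1 m2 ns"])
    (use mode_prod_cancel transform_inverse[OF assms(1)] assms(2) in \<open>auto simp: is_tensor_mode_prod\<close>)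

lemma Linv_eq_iff:
  assumes "is_transform ns Us al" "is_tensor m1 m2 ns X" "is_tensor m1 m2 ns Y"
  shows "Linv m1 m2 ns Us al X = Linv m1 m2 ns Us al Y \<longleftrightarrow> X = Y"
  using Ltr_Linv[OF assms(1,2)] Ltr_Linv[OF assms(1,3)] by metis

lemma tensor_eqI_Ltr:
  assumes "is_transform ns Us al" "ns \<noteq> []" "is_tensor m1 m2 ns X" "is_tensor m1 m2 ns Y"
    and "\<And>i j is. in_range m1 m2 ns i j is \<Longrightarrow> Ltr m1 m2 ns Us X i j is = Ltr m1 m2 ns Us Y i j is"
  shows "X = Y"
proof -
  have "Ltr m1 m2 ns Us X i j is = Ltr m1 m2 ns Us Y i j is" for i j "is"
    using assms(5) is_tensor_Ltr[OF assms(2)] unfolding is_tensor_def by (cases "in_range m1 m2 ns i j is") auto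
  then have "Ltr m1 m2 ns Us X = Ltr m1 m2 ns Us Y" by (intro ext)
  then show ?thesis using Linv_Ltr[OF assms(1,3)] Linv_Ltr[OF assms(1,4)] by metis
qed

lemma Ltr_tprod:
  assumes "is_transform ns Us al"
  shows "Ltr m1 m2 ns Us (tprod m1 r m2 ns Us al A B) = (\<lambda>i1 i2 is. if in_range m1 m2 ns i1 i2 is
      then (\<Sum>l<r. Ltr m1 r ns Us A i1 l is * Ltr r m2 ns Us B l i2 is) else 0)"
  unfolding tprod_def by (rule Ltr_Linv[OF assms]) (simp add: is_tensor_def)

lemma Ltr_ttrans:
  assumes "is_transform ns Us al"
  shows "Ltr m2 m1 ns Us (ttrans m1 m2 ns Us al A) = (\<lambda>i1 i2 is. if in_range m2 m1 ns i1 i2 is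
      then cnj (Ltr m1 m2 ns Us A i2 i1 is) else 0)"
  unfolding ttrans_def by (rule Ltr_Linv[OF assms]) (simp add: is_tensor_def)

lemma Ltr_tsandwich:
  assumes "is_transform ns Us al" "in_range m1 m2 ns i j is"
  shows "Ltr m1 m2 ns Us (tsandwich m1 r1 r2 m2 ns Us al P M Q) i j is
    = mat_sandwich r1 r2 (tslice m1 r1 ns Us P is) (tslice r1 r2 ns Us M is) (tslice m2 r2 ns Us Q is) i j"
  using assms(2) unfolding Ltr_tprod[OF assms(1)] Ltr_ttrans[OF assms(1)] mat_sandwich_def mat_mult_def
  by (auto intro!: sum.cong simp: in_range_def)

lemma part_orth_iff:
  assumes "is_transform ns Us al"
  shows "part_orth m k ns Us al Q \<longleftrightarrow> (\<forall>is. valid_idx ns is \<longrightarrow> orthonormal_cols m k (tslice m k ns Us Q is))"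
proof -
  have "part_orth m k ns Us al Q \<longleftrightarrow>
    (\<lambda>i1 i2 is. if in_range k k ns i1 i2 is
       then (\<Sum>l<m. Ltr k m ns Us (ttrans m k ns Us al Q) i1 l is * Ltr m k ns Us Q l i2 is) else 0)
    = (\<lambda>i1 i2 is. if in_range k k ns i1 i2 is \<and> i1 = i2 then 1 else 0)"
    unfolding part_orth_def tprod_def tid_def by (rule Linv_eq_iff[OF assms]) (auto simp: is_tensor_def)
  also have "\<dots> \<longleftrightarrow>
    (\<lambda>i1 i2 is. if in_range k k ns i1 i2 is
       then (\<Sum>l<m. cnj (Ltr m k ns Us Q l i1 is) * Ltr m k ns Us Q l i2 is) else 0)
    = (\<lambda>i1 i2 is. if in_range k k ns i1 i2 is \<and> i1 = i2 then 1 else 0)"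
    unfolding Ltr_ttrans[OF assms]
    by (intro arg_cong2[where f="(=)"] refl ext) (auto intro!: sum.cong simp: in_range_def)
  also have "\<dots> \<longleftrightarrow> (\<forall>is. valid_idx ns is \<longrightarrow> orthonormal_cols m k (tslice m k ns Us Q is))"
    unfolding orthonormal_cols_def fun_eq_iff in_range_def by (auto split: if_splits)
  finally show ?thesis .
qed

lemma orth_iff:
  assumes "is_transform ns Us al"
  shows "orth m ns Us al Q \<longleftrightarrow> (\<forall>is. valid_idx ns is \<longrightarrow> unitary_mat m (tslice m m ns Us Q is))"
proof -
  have "tprod m m m ns Us al Q (ttrans m m ns Us al Q) = tid m ns Us al \<longleftrightarrow>
    (\<lambda>i1 i2 is. if in_range m m ns i1 i2 is
       then (\<Sum>l<m. Ltr m m ns Us Q i1 l is * Ltr m m ns Us (ttrans m m ns Us al Q) l i2 is) else 0)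
    = (\<lambda>i1 i2 is. if in_range m m ns i1 i2 is \<and> i1 = i2 then 1 else 0)"
    unfolding tprod_def tid_def by (rule Linv_eq_iff[OF assms]) (auto simp: is_tensor_def)
  also have "\<dots> \<longleftrightarrow>
    (\<lambda>i1 i2 is. if in_range m m ns i1 i2 is
       then (\<Sum>l<m. Ltr m m ns Us Q i1 l is * cnj (Ltr m m ns Us Q i2 l is)) else 0)
    = (\<lambda>i1 i2 is. if in_range m m ns i1 i2 is \<and> i1 = i2 then 1 else 0)"
    unfolding Ltr_ttrans[OF assms]
    by (intro arg_cong2[where f="(=)"] refl ext) (auto intro!: sum.cong simp: in_range_def)
  also have "\<dots> \<longleftrightarrow> (\<forall>is. valid_idx ns is \<longrightarrow> orthonormal_rows m m (tslice m m ns Us Q is))"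
    unfolding orthonormal_rows_def fun_eq_iff in_range_def by (auto split: if_splits)
  finally show ?thesis unfolding orth_def part_orth_iff[OF assms] unitary_mat_def by blast
qed

lemma f_diag_fold_mode_prod: "f_diag X \<Longrightarrow> f_diag (fold (\<lambda>a X. mode_prod m1 m2 ns a (F a) X) xs X)"
proof (induction xs arbitrary: X)
  case (Cons x xs)
  then show ?case unfolding f_diag_def mode_prod_def by simp
qed simp

lemma f_diag_Ltr: "f_diag X \<Longrightarrow> f_diag (Ltr m1 m2 ns Us X)"
  unfolding Ltr_def by (rule f_diag_fold_mode_prod)

lemma f_diag_Linv: "f_diag X \<Longrightarrow> f_diag (Linv m1 m2 ns Us al X)"
  unfolding Linv_def by (rule f_diag_fold_mode_prod)

section \<open>T-SVD and GTSVT of a sandwiched tensor\<close>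

definition tensor_of_slices :: "nat \<Rightarrow> nat \<Rightarrow> nat list \<Rightarrow> (nat list \<Rightarrow> cmat) \<Rightarrow> tensor" where
  "tensor_of_slices m1 m2 ns F = (\<lambda>i1 i2 is. if in_range m1 m2 ns i1 i2 is then F is i1 i2 else 0)"

definition diag_mat :: "(nat \<Rightarrow> complex) \<Rightarrow> cmat" where
  "diag_mat d = (\<lambda>i j. if i = j then d i else 0)"

definition gst_diag :: "nat \<Rightarrow> nat \<Rightarrow> nat list \<Rightarrow> (nat \<Rightarrow> cmat) \<Rightarrow> (nat \<Rightarrow> nat \<Rightarrow> real) \<Rightarrow> real \<Rightarrow> real \<Rightarrow>
    tensor \<Rightarrow> nat list \<Rightarrow> nat \<Rightarrow> complex" where
  "gst_diag m1 m2 ns Us w p tau S is l =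
     of_real (GST (Re (Ltr m1 m2 ns Us S l l is)) (tau * w (Suc l) (lin_idx ns is)) p)"

definition gtsvt_of :: "nat \<Rightarrow> nat \<Rightarrow> nat list \<Rightarrow> (nat \<Rightarrow> cmat) \<Rightarrow> (nat \<Rightarrow> real) \<Rightarrow>
    (nat \<Rightarrow> nat \<Rightarrow> real) \<Rightarrow> real \<Rightarrow> real \<Rightarrow> tensor \<Rightarrow> tensor \<Rightarrow> tensor \<Rightarrow> tensor" where
  "gtsvt_of m1 m2 ns Us al w p tau U S V = tsandwich m1 m1 m2 m2 ns Us al U
     (Linv m1 m2 ns Us al (tensor_of_slices m1 m2 ns (\<lambda>is. diag_mat (gst_diag m1 m2 ns Us w p tau S is)))) V"

lemma GST_zero:
  assumes "0 \<le> t" "0 \<le> p"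
  shows "GST 0 t p = 0"
proof -
  have "0 \<le> gst_delta t p"
    unfolding gst_delta_def using assms by (auto intro!: add_nonneg_nonneg mult_nonneg_nonneg)
  then show ?thesis by (simp add: GST_def)
qed

lemma is_gtsvt_iff:
  "is_gtsvt m1 m2 ns Us al w p tau A X \<longleftrightarrow>
     (\<exists>U S V. is_TSVD m1 m2 ns Us al A U S V \<and> X = gtsvt_of m1 m2 ns Us al w p tau U S V)"
proof -
  have "tensor_of_slices m1 m2 ns (\<lambda>is. diag_mat (gst_diag m1 m2 ns Us w p tau S is))
      = (\<lambda>i1 i2 is. if in_range m1 m2 ns i1 i2 is \<and> i1 = i2
           then complex_of_real (GST (Re (Ltr m1 m2 ns Us S i1 i1 is)) (tau * w (Suc i1) (lin_idx ns is)) p)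
           else 0)" for S
    by (simp add: fun_eq_iff tensor_of_slices_def diag_mat_def gst_diag_def)
  then show ?thesis unfolding is_gtsvt_def gtsvt_of_def by simp
qed

lemma Ltr_Linv_tensor_of_slices:
  assumes "is_transform ns Us al"
  shows "Ltr m1 m2 ns Us (Linv m1 m2 ns Us al (tensor_of_slices m1 m2 ns F)) i j is
    = (if in_range m1 m2 ns i j is then F is i j else 0)"
  by (subst Ltr_Linv[OF assms]) (auto simp: is_tensor_def tensor_of_slices_def)

lemma Ltr_tsvd:
  assumes "is_transform ns Us al" "f_diag (Ltr m1 m2 ns Us D)" "in_range m1 m2 ns i j is"
  shows "Ltr m1 m2 ns Us (tsandwich m1 m1 m2 m2 ns Us al U D V) i j is
    = svd_compose (min m1 m2) (tslice m1 m1 ns Us U is) (\<lambda>l. Ltr m1 m2 ns Us D l l is) (tslice m2 m2 ns Us V is) i j"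
  using assms(2) unfolding Ltr_tsandwich[OF assms(1,3)] f_diag_def by (intro mat_sandwich_diag) auto

lemma Ltr_tsandwich_diag:
  assumes tr: "is_transform ns Us al" and ij: "in_range m1 m2 ns i j is"
  shows "Ltr m1 m2 ns Us (tsandwich m1 m1 m2 m2 ns Us al U
      (Linv m1 m2 ns Us al (tensor_of_slices m1 m2 ns (\<lambda>is. diag_mat (d is)))) V) i j is
    = svd_compose (min m1 m2) (tslice m1 m1 ns Us U is) (d is) (tslice m2 m2 ns Us V is) i j"
proof -
  let ?D = "Linv m1 m2 ns Us al (tensor_of_slices m1 m2 ns (\<lambda>is. diag_mat (d is)))"
  note L = Ltr_Linv_tensor_of_slices[OF tr]
  have "f_diag (Ltr m1 m2 ns Us ?D)"
    unfolding f_diag_def L by (simp add: diag_mat_def)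
  then have "Ltr m1 m2 ns Us (tsandwich m1 m1 m2 m2 ns Us al U ?D V) i j is = svd_compose (min m1 m2)
      (tslice m1 m1 ns Us U is) (\<lambda>l. Ltr m1 m2 ns Us ?D l l is) (tslice m2 m2 ns Us V is) i j"
    by (rule Ltr_tsvd[OF tr _ ij])
  also have "\<dots> = svd_compose (min m1 m2) (tslice m1 m1 ns Us U is) (d is) (tslice m2 m2 ns Us V is) i j"
    using ij unfolding L by (intro svd_compose_cong) (auto simp: in_range_def diag_mat_def)
  finally show ?thesis .
qed

lemma Ltr_gtsvt_of:
  assumes "is_transform ns Us al" "in_range m1 m2 ns i j is"
  shows "Ltr m1 m2 ns Us (gtsvt_of m1 m2 ns Us al w p tau U S V) i j is = svd_compose (min m1 m2)
    (tslice m1 m1 ns Us U is) (gst_diag m1 m2 ns Us w p tau S is) (tslice m2 m2 ns Us V is) i j"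
  unfolding gtsvt_of_def by (rule Ltr_tsandwich_diag[OF assms])

lemma is_TSVD_slice_svd:
  assumes tr: "is_transform ns Us al" and tsvd: "is_TSVD m1 m2 ns Us al A U S V" and "valid_idx ns is"
  shows "is_svd m1 m2 (tslice m1 m2 ns Us A is) (tslice m1 m1 ns Us U is)
    (\<lambda>l. Re (Ltr m1 m2 ns Us S l l is)) (tslice m2 m2 ns Us V is)"
proof -
  have real: "Ltr m1 m2 ns Us S l l is = of_real (Re (Ltr m1 m2 ns Us S l l is))" if "l < min m1 m2" for l
    using tsvd assms(3) that unfolding is_TSVD_def by (metis Reals_cases Re_complex_of_real)
  have "Ltr m1 m2 ns Us A i j is = svd_compose (min m1 m2) (tslice m1 m1 ns Us U is)
      (\<lambda>l. of_real (Re (Ltr m1 m2 ns Us S l l is))) (tslice m2 m2 ns Us V is) i j"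
    if "i < m1" "j < m2" for i j
  proof -
    have "in_range m1 m2 ns i j is" using that assms(3) by (simp add: in_range_def)
    moreover have "f_diag (Ltr m1 m2 ns Us S)" using tsvd f_diag_Ltr unfolding is_TSVD_def by blast
    moreover have "A = tsandwich m1 m1 m2 m2 ns Us al U S V" using tsvd unfolding is_TSVD_def by blast
    ultimately have "Ltr m1 m2 ns Us A i j is = svd_compose (min m1 m2) (tslice m1 m1 ns Us U is)
        (\<lambda>l. Ltr m1 m2 ns Us S l l is) (tslice m2 m2 ns Us V is) i j"
      using Ltr_tsvd[OF tr] by simp
    also have "\<dots> = svd_compose (min m1 m2) (tslice m1 m1 ns Us U is)
        (\<lambda>l. of_real (Re (Ltr m1 m2 ns Us S l l is))) (tslice m2 m2 ns Us V is) i j"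
      using real by (intro svd_compose_cong) auto
    finally show ?thesis .
  qed
  then show ?thesis using tsvd assms(3) unfolding is_svd_def is_TSVD_def orth_iff[OF tr] by blast
qed

lemma choice2:
  assumes "\<forall>x. P x \<longrightarrow> (\<exists>y z. Q x y z)"
  shows "\<exists>f g. \<forall>x. P x \<longrightarrow> Q x (f x) (g x)"
  using assms by metis

lemma is_TSVD_of_slices:
  assumes tr: "is_transform ns Us al" and ns: "ns \<noteq> []" and A: "is_tensor m1 m2 ns A"
    and svd: "\<forall>is. valid_idx ns is \<longrightarrow>
      (\<exists>Ui Vi. is_svd m1 m2 (tslice m1 m2 ns Us A is) Ui (s is) Vi \<and> R is Ui Vi)"
  obtains U S V Uf Vf where "is_TSVD m1 m2 ns Us al A U S V"
    and "\<forall>is. valid_idx ns is \<longrightarrow> R is (Uf is) (Vf is) \<and>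
      (\<forall>i<m1. \<forall>j<m1. Ltr m1 m1 ns Us U i j is = Uf is i j) \<and>
      (\<forall>i<m2. \<forall>j<m2. Ltr m2 m2 ns Us V i j is = Vf is i j) \<and>
      (\<forall>l<min m1 m2. Re (Ltr m1 m2 ns Us S l l is) = s is l)"
proof -
  from choice2[OF svd] obtain Uf Vf where UVf: "\<forall>is. valid_idx ns is \<longrightarrow>
      is_svd m1 m2 (tslice m1 m2 ns Us A is) (Uf is) (s is) (Vf is) \<and> R is (Uf is) (Vf is)"
    by blast
  define U where "U = Linv m1 m1 ns Us al (tensor_of_slices m1 m1 ns Uf)"
  define V where "V = Linv m2 m2 ns Us al (tensor_of_slices m2 m2 ns Vf)"
  define S where "S = Linv m1 m2 ns Us al (tensor_of_slices m1 m2 ns (\<lambda>is. diag_mat (\<lambda>l. of_real (s is l))))"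
  note L = Ltr_Linv_tensor_of_slices[OF tr]
  have "f_diag S"
    unfolding S_def by (rule f_diag_Linv) (simp add: f_diag_def tensor_of_slices_def diag_mat_def)
  moreover have "is_tensor m1 m1 ns U" "is_tensor m1 m2 ns S" "is_tensor m2 m2 ns V"
    unfolding U_def S_def V_def by (simp_all add: is_tensor_Linv[OF ns])
  moreover have "orth m1 ns Us al U" "orth m2 ns Us al V"
    using UVf unfolding orth_iff[OF tr] U_def V_def L is_svd_def
    by (auto simp: in_range_def cong: unitary_mat_cong)
  moreover have "A = tsandwich m1 m1 m2 m2 ns Us al U S V"
  proof (rule tensor_eqI_Ltr[OF tr ns A is_tensor_tprod[OF ns]])
    fix i j "is" assume ij: "in_range m1 m2 ns i j is"
    have "Ltr m1 m2 ns Us (tsandwich m1 m1 m2 m2 ns Us al U S V) i j is = svd_compose (min m1 m2)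
        (tslice m1 m1 ns Us U is) (\<lambda>l. of_real (s is l)) (tslice m2 m2 ns Us V is) i j"
      unfolding S_def by (rule Ltr_tsandwich_diag[OF tr ij])
    also have "\<dots> = svd_compose (min m1 m2) (Uf is) (\<lambda>l. of_real (s is l)) (Vf is) i j"
      using ij unfolding U_def V_def L by (intro svd_compose_cong) (auto simp: in_range_def)
    finally show "Ltr m1 m2 ns Us A i j is = Ltr m1 m2 ns Us (tsandwich m1 m1 m2 m2 ns Us al U S V) i j is"
      using UVf ij by (simp add: is_svd_def in_range_def)
  qed
  moreover have "\<forall>is. valid_idx ns is \<longrightarrow>
      (\<forall>i<min m1 m2. Ltr m1 m2 ns Us S i i is \<in> \<real> \<and> 0 \<le> Re (Ltr m1 m2 ns Us S i i is)) \<and>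
      (\<forall>i. Suc i < min m1 m2 \<longrightarrow> Re (Ltr m1 m2 ns Us S (Suc i) (Suc i) is) \<le> Re (Ltr m1 m2 ns Us S i i is))"
    using UVf unfolding S_def L by (auto simp: is_svd_def in_range_def diag_mat_def)
  ultimately have "is_TSVD m1 m2 ns Us al A U S V"
    unfolding is_TSVD_def by blast
  moreover have "\<forall>is. valid_idx ns is \<longrightarrow>
     (\<forall>i<m1. \<forall>j<m1. Ltr m1 m1 ns Us U i j is = Uf is i j) \<and>
     (\<forall>i<m2. \<forall>j<m2. Ltr m2 m2 ns Us V i j is = Vf is i j) \<and>
     (\<forall>l<min m1 m2. Re (Ltr m1 m2 ns Us S l l is) = s is l)"
    unfolding U_def V_def S_def L by (simp add: in_range_def diag_mat_def)
  ultimately show thesis using that UVf by blast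
qed

lemma gtsvt_of_sandwich:
  assumes tr: "is_transform ns Us al" and ns: "ns \<noteq> []"
    and slices: "\<forall>is i j. valid_idx ns is \<longrightarrow> i < n1 \<longrightarrow> j < n2 \<longrightarrow>
      svd_compose (min n1 n2) (tslice n1 n1 ns Us U is) (gst_diag n1 n2 ns Us w p tau S is) (tslice n2 n2 ns Us V is) i j
      = mat_sandwich k k (tslice n1 k ns Us Q1 is)
          (svd_compose k (tslice k k ns Us U' is) (gst_diag k k ns Us w p tau S' is) (tslice k k ns Us V' is))
          (tslice n2 k ns Us Q2 is) i j"
  shows "gtsvt_of n1 n2 ns Us al w p tau U S V
    = tsandwich n1 k k n2 ns Us al Q1 (gtsvt_of k k ns Us al w p tau U' S' V') Q2"
proof (rule tensor_eqI_Ltr[OF tr ns])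
  show "is_tensor n1 n2 ns (gtsvt_of n1 n2 ns Us al w p tau U S V)"
    unfolding gtsvt_of_def by (rule is_tensor_tprod[OF ns])
  show "is_tensor n1 n2 ns (tsandwich n1 k k n2 ns Us al Q1 (gtsvt_of k k ns Us al w p tau U' S' V') Q2)"
    by (rule is_tensor_tprod[OF ns])
next
  fix i j "is" assume ij: "in_range n1 n2 ns i j is"
  have "Ltr n1 n2 ns Us (gtsvt_of n1 n2 ns Us al w p tau U S V) i j is
      = mat_sandwich k k (tslice n1 k ns Us Q1 is)
          (svd_compose k (tslice k k ns Us U' is) (gst_diag k k ns Us w p tau S' is) (tslice k k ns Us V' is))
          (tslice n2 k ns Us Q2 is) i j"
    using slices ij unfolding Ltr_gtsvt_of[OF tr ij] in_range_def by blast
  also have "\<dots> = mat_sandwich k k (tslice n1 k ns Us Q1 is)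
      (tslice k k ns Us (gtsvt_of k k ns Us al w p tau U' S' V') is) (tslice n2 k ns Us Q2 is) i j"
    using ij by (intro mat_sandwich_cong) (simp add: Ltr_gtsvt_of[OF tr] in_range_def)
  also have "\<dots> = Ltr n1 n2 ns Us (tsandwich n1 k k n2 ns Us al Q1 (gtsvt_of k k ns Us al w p tau U' S' V') Q2) i j is"
    by (rule Ltr_tsandwich[OF tr ij, symmetric])
  finally show "Ltr n1 n2 ns Us (gtsvt_of n1 n2 ns Us al w p tau U S V) i j is
    = Ltr n1 n2 ns Us (tsandwich n1 k k n2 ns Us al Q1 (gtsvt_of k k ns Us al w p tau U' S' V') Q2) i j is" .
qed

lemma is_TSVD_sandwich_extend:
  assumes tr: "is_transform ns Us al" and ns: "ns \<noteq> []"
    and Q1: "part_orth n1 k ns Us al Q1" and Q2: "part_orth n2 k ns Us al Q2"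
    and tsvdB: "is_TSVD k k ns Us al B U' S' V'"
  obtains U S V where "is_TSVD n1 n2 ns Us al (tsandwich n1 k k n2 ns Us al Q1 B Q2) U S V"
    and "\<forall>is. valid_idx ns is \<longrightarrow>
      (\<forall>l<min n1 n2. Re (Ltr n1 n2 ns Us S l l is) = (if l < k then Re (Ltr k k ns Us S' l l is) else 0)) \<and>
      (\<forall>d i j. i < n1 \<longrightarrow> j < n2 \<longrightarrow>
        svd_compose (min n1 n2) (tslice n1 n1 ns Us U is) (\<lambda>l. if l < k then d l else 0) (tslice n2 n2 ns Us V is) i j
        = mat_sandwich k k (tslice n1 k ns Us Q1 is) (svd_compose k (tslice k k ns Us U' is) d (tslice k k ns Us V' is))
            (tslice n2 k ns Us Q2 is) i j)"
proof -
  let ?A = "tsandwich n1 k k n2 ns Us al Q1 B Q2"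
  let ?s = "\<lambda>is l. if l < k then Re (Ltr k k ns Us S' l l is) else 0"
  let ?R = "\<lambda>is Ui Vi. \<forall>d i j. i < n1 \<longrightarrow> j < n2 \<longrightarrow>
    svd_compose (min n1 n2) Ui (\<lambda>l. if l < k then d l else 0) Vi i j
    = mat_sandwich k k (tslice n1 k ns Us Q1 is) (svd_compose k (tslice k k ns Us U' is) d (tslice k k ns Us V' is))
        (tslice n2 k ns Us Q2 is) i j"
  have "\<forall>is. valid_idx ns is \<longrightarrow> (\<exists>Ui Vi. is_svd n1 n2 (tslice n1 n2 ns Us ?A is) Ui (?s is) Vi \<and> ?R is Ui Vi)"
  proof (intro allI impI)
    fix "is" assume v: "valid_idx ns is"
    show "\<exists>Ui Vi. is_svd n1 n2 (tslice n1 n2 ns Us ?A is) Ui (?s is) Vi \<and> ?R is Ui Vi"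
      using Q1 Q2 v is_TSVD_slice_svd[OF tr tsvdB v] unfolding part_orth_iff[OF tr]
      by (intro is_svd_sandwich_extend) (auto simp: Ltr_tsandwich[OF tr] in_range_def)
  qed
  from is_TSVD_of_slices[OF tr ns is_tensor_tprod[OF ns] this]
  obtain U S V Uf Vf where tsvdA: "is_TSVD n1 n2 ns Us al ?A U S V"
    and UVS: "\<forall>is. valid_idx ns is \<longrightarrow> ?R is (Uf is) (Vf is) \<and>
     (\<forall>i<n1. \<forall>j<n1. Ltr n1 n1 ns Us U i j is = Uf is i j) \<and>
     (\<forall>i<n2. \<forall>j<n2. Ltr n2 n2 ns Us V i j is = Vf is i j) \<and>
     (\<forall>l<min n1 n2. Re (Ltr n1 n2 ns Us S l l is) = ?s is l)"
    by blast
  have "?R is (tslice n1 n1 ns Us U is) (tslice n2 n2 ns Us V is)" if v: "valid_idx ns is" for "is"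
  proof (intro allI impI)
    fix d i j assume ij: "i < n1" "j < n2"
    have "svd_compose (min n1 n2) (tslice n1 n1 ns Us U is) (\<lambda>l. if l < k then d l else 0) (tslice n2 n2 ns Us V is) i j
      = svd_compose (min n1 n2) (Uf is) (\<lambda>l. if l < k then d l else 0) (Vf is) i j"
      using UVS v ij by (intro svd_compose_cong) auto
    then show "svd_compose (min n1 n2) (tslice n1 n1 ns Us U is) (\<lambda>l. if l < k then d l else 0) (tslice n2 n2 ns Us V is) i j
      = mat_sandwich k k (tslice n1 k ns Us Q1 is) (svd_compose k (tslice k k ns Us U' is) d (tslice k k ns Us V' is))
          (tslice n2 k ns Us Q2 is) i j"
      using UVS v ij by simp
  qed
  then show ?thesis using that tsvdA UVS by blast
qed

lemma gtsvt_sandwich_supset: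
  assumes tr: "is_transform ns Us al" and ns: "ns \<noteq> []"
    and w: "\<forall>is l. valid_idx ns is \<longrightarrow> 0 \<le> tau * w (Suc l) (lin_idx ns is)" and p: "0 \<le> p"
    and Q1: "part_orth n1 k ns Us al Q1" and Q2: "part_orth n2 k ns Us al Q2"
    and Y: "is_gtsvt k k ns Us al w p tau B Y"
  shows "is_gtsvt n1 n2 ns Us al w p tau (tsandwich n1 k k n2 ns Us al Q1 B Q2) (tsandwich n1 k k n2 ns Us al Q1 Y Q2)"
proof -
  obtain U' S' V' where tsvdB: "is_TSVD k k ns Us al B U' S' V'"
    and Y: "Y = gtsvt_of k k ns Us al w p tau U' S' V'"
    using Y unfolding is_gtsvt_iff by blast
  obtain U S V where tsvdA: "is_TSVD n1 n2 ns Us al (tsandwich n1 k k n2 ns Us al Q1 B Q2) U S V"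
    and rel: "\<forall>is. valid_idx ns is \<longrightarrow>
      (\<forall>l<min n1 n2. Re (Ltr n1 n2 ns Us S l l is) = (if l < k then Re (Ltr k k ns Us S' l l is) else 0)) \<and>
      (\<forall>d i j. i < n1 \<longrightarrow> j < n2 \<longrightarrow>
        svd_compose (min n1 n2) (tslice n1 n1 ns Us U is) (\<lambda>l. if l < k then d l else 0) (tslice n2 n2 ns Us V is) i j
        = mat_sandwich k k (tslice n1 k ns Us Q1 is) (svd_compose k (tslice k k ns Us U' is) d (tslice k k ns Us V' is))
            (tslice n2 k ns Us Q2 is) i j)"
    using is_TSVD_sandwich_extend[OF tr ns Q1 Q2 tsvdB] by blast
  have "gtsvt_of n1 n2 ns Us al w p tau U S V = tsandwich n1 k k n2 ns Us al Q1 Y Q2"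
    unfolding Y
  proof (intro gtsvt_of_sandwich[OF tr ns] allI impI)
    fix "is" i j assume v: "valid_idx ns is" and ij: "i < n1" "j < n2"
    have "gst_diag n1 n2 ns Us w p tau S is l = (if l < k then gst_diag k k ns Us w p tau S' is l else 0)"
      if "l < min n1 n2" for l
      using rel v that GST_zero[OF _ p] w by (simp add: gst_diag_def)
    then have "svd_compose (min n1 n2) (tslice n1 n1 ns Us U is) (gst_diag n1 n2 ns Us w p tau S is)
        (tslice n2 n2 ns Us V is) i j = svd_compose (min n1 n2) (tslice n1 n1 ns Us U is)
        (\<lambda>l. if l < k then gst_diag k k ns Us w p tau S' is l else 0) (tslice n2 n2 ns Us V is) i j"
      by (intro svd_compose_cong) auto
    then show "svd_compose (min n1 n2) (tslice n1 n1 ns Us U is) (gst_diag n1 n2 ns Us w p tau S is)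
        (tslice n2 n2 ns Us V is) i j
      = mat_sandwich k k (tslice n1 k ns Us Q1 is)
          (svd_compose k (tslice k k ns Us U' is) (gst_diag k k ns Us w p tau S' is) (tslice k k ns Us V' is))
          (tslice n2 k ns Us Q2 is) i j"
      using rel v ij by simp
  qed
  then show ?thesis using tsvdA unfolding is_gtsvt_iff by metis
qed

lemma is_TSVD_sandwich_compress:
  assumes tr: "is_transform ns Us al" and ns: "ns \<noteq> []" and B: "is_tensor k k ns B"
    and Q1: "part_orth n1 k ns Us al Q1" and Q2: "part_orth n2 k ns Us al Q2"
    and tsvdA: "is_TSVD n1 n2 ns Us al (tsandwich n1 k k n2 ns Us al Q1 B Q2) U S V"
  obtains U' S' V' where "is_TSVD k k ns Us al B U' S' V'"
    and "\<forall>is. valid_idx ns is \<longrightarrow>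
      (\<forall>l<k. Re (Ltr k k ns Us S' l l is) = Re (Ltr n1 n2 ns Us S l l is)) \<and>
      (\<forall>d. (\<forall>l<min n1 n2. Re (Ltr n1 n2 ns Us S l l is) = 0 \<longrightarrow> d l = 0) \<longrightarrow> (\<forall>i<n1. \<forall>j<n2.
        svd_compose (min n1 n2) (tslice n1 n1 ns Us U is) d (tslice n2 n2 ns Us V is) i j
        = mat_sandwich k k (tslice n1 k ns Us Q1 is) (svd_compose k (tslice k k ns Us U' is) d (tslice k k ns Us V' is))
            (tslice n2 k ns Us Q2 is) i j))"
proof -
  let ?s = "\<lambda>is l. Re (Ltr n1 n2 ns Us S l l is)"
  let ?R = "\<lambda>is Ui Vi. \<forall>d. (\<forall>l<min n1 n2. ?s is l = 0 \<longrightarrow> d l = 0) \<longrightarrow> (\<forall>i<n1. \<forall>j<n2.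
    svd_compose (min n1 n2) (tslice n1 n1 ns Us U is) d (tslice n2 n2 ns Us V is) i j
    = mat_sandwich k k (tslice n1 k ns Us Q1 is) (svd_compose k Ui d Vi) (tslice n2 k ns Us Q2 is) i j)"
  have "\<forall>is. valid_idx ns is \<longrightarrow> (\<exists>Ui Vi. is_svd k k (tslice k k ns Us B is) Ui (?s is) Vi \<and> ?R is Ui Vi)"
  proof (intro allI impI)
    fix "is" assume v: "valid_idx ns is"
    show "\<exists>Ui Vi. is_svd k k (tslice k k ns Us B is) Ui (?s is) Vi \<and> ?R is Ui Vi"
      using Q1 Q2 v is_TSVD_slice_svd[OF tr tsvdA v] unfolding part_orth_iff[OF tr]
      by (intro is_svd_sandwich_compress) (auto simp: Ltr_tsandwich[OF tr] in_range_def)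
  qed
  from is_TSVD_of_slices[OF tr ns B this]
  obtain U' S' V' Uf Vf where tsvdB: "is_TSVD k k ns Us al B U' S' V'"
    and UVS: "\<forall>is. valid_idx ns is \<longrightarrow> ?R is (Uf is) (Vf is) \<and>
     (\<forall>i<k. \<forall>j<k. Ltr k k ns Us U' i j is = Uf is i j) \<and>
     (\<forall>i<k. \<forall>j<k. Ltr k k ns Us V' i j is = Vf is i j) \<and>
     (\<forall>l<min k k. Re (Ltr k k ns Us S' l l is) = ?s is l)"
    by blast
  have R: "?R is (tslice k k ns Us U' is) (tslice k k ns Us V' is)" if v: "valid_idx ns is" for "is"
  proof (intro allI impI)
    fix d :: "nat \<Rightarrow> complex" and i j
    assume d: "\<forall>l<min n1 n2. ?s is l = 0 \<longrightarrow> d l = 0" and ij: "i < n1" "j < n2"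
    have "?R is (Uf is) (Vf is)" using UVS v by blast
    note eq = this[rule_format, OF d[rule_format] ij]
    have "mat_sandwich k k (tslice n1 k ns Us Q1 is) (svd_compose k (Uf is) d (Vf is)) (tslice n2 k ns Us Q2 is) i j
      = mat_sandwich k k (tslice n1 k ns Us Q1 is) (svd_compose k (tslice k k ns Us U' is) d (tslice k k ns Us V' is))
          (tslice n2 k ns Us Q2 is) i j"
      using UVS v by (intro mat_sandwich_cong svd_compose_cong) auto
    then show "svd_compose (min n1 n2) (tslice n1 n1 ns Us U is) d (tslice n2 n2 ns Us V is) i j
      = mat_sandwich k k (tslice n1 k ns Us Q1 is) (svd_compose k (tslice k k ns Us U' is) d (tslice k k ns Us V' is))
          (tslice n2 k ns Us Q2 is) i j"
      using eq by simp
  qed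
  show ?thesis
  proof (rule that[OF tsvdB], intro allI impI, rule conjI)
    fix "is" assume v: "valid_idx ns is"
    show "\<forall>l<k. Re (Ltr k k ns Us S' l l is) = ?s is l" using UVS v by simp
    show "?R is (tslice k k ns Us U' is) (tslice k k ns Us V' is)" using R[OF v] .
  qed
qed

lemma gtsvt_sandwich_subset:
  assumes tr: "is_transform ns Us al" and ns: "ns \<noteq> []"
    and w: "\<forall>is l. valid_idx ns is \<longrightarrow> 0 \<le> tau * w (Suc l) (lin_idx ns is)" and p: "0 \<le> p"
    and Q1: "part_orth n1 k ns Us al Q1" and Q2: "part_orth n2 k ns Us al Q2"
    and B: "is_tensor k k ns B"
    and X: "is_gtsvt n1 n2 ns Us al w p tau (tsandwich n1 k k n2 ns Us al Q1 B Q2) X"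
  shows "\<exists>Y. is_gtsvt k k ns Us al w p tau B Y \<and> X = tsandwich n1 k k n2 ns Us al Q1 Y Q2"
proof -
  obtain U S V where tsvdA: "is_TSVD n1 n2 ns Us al (tsandwich n1 k k n2 ns Us al Q1 B Q2) U S V"
    and X: "X = gtsvt_of n1 n2 ns Us al w p tau U S V"
    using X unfolding is_gtsvt_iff by blast
  obtain U' S' V' where tsvdB: "is_TSVD k k ns Us al B U' S' V'"
    and rel: "\<forall>is. valid_idx ns is \<longrightarrow>
      (\<forall>l<k. Re (Ltr k k ns Us S' l l is) = Re (Ltr n1 n2 ns Us S l l is)) \<and>
      (\<forall>d. (\<forall>l<min n1 n2. Re (Ltr n1 n2 ns Us S l l is) = 0 \<longrightarrow> d l = 0) \<longrightarrow> (\<forall>i<n1. \<forall>j<n2.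
        svd_compose (min n1 n2) (tslice n1 n1 ns Us U is) d (tslice n2 n2 ns Us V is) i j
        = mat_sandwich k k (tslice n1 k ns Us Q1 is) (svd_compose k (tslice k k ns Us U' is) d (tslice k k ns Us V' is))
            (tslice n2 k ns Us Q2 is) i j))"
    using is_TSVD_sandwich_compress[OF tr ns B Q1 Q2 tsvdA] by blast
  have "X = tsandwich n1 k k n2 ns Us al Q1 (gtsvt_of k k ns Us al w p tau U' S' V') Q2"
    unfolding X
  proof (intro gtsvt_of_sandwich[OF tr ns] allI impI)
    fix "is" i j assume v: "valid_idx ns is" and ij: "i < n1" "j < n2"
    have "\<forall>l<min n1 n2. Re (Ltr n1 n2 ns Us S l l is) = 0 \<longrightarrow> gst_diag n1 n2 ns Us w p tau S is l = 0"
      using GST_zero[OF _ p] w v by (simp add: gst_diag_def)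
    then have "svd_compose (min n1 n2) (tslice n1 n1 ns Us U is) (gst_diag n1 n2 ns Us w p tau S is)
        (tslice n2 n2 ns Us V is) i j
      = mat_sandwich k k (tslice n1 k ns Us Q1 is)
          (svd_compose k (tslice k k ns Us U' is) (gst_diag n1 n2 ns Us w p tau S is) (tslice k k ns Us V' is))
          (tslice n2 k ns Us Q2 is) i j"
      using rel v ij by blast
    also have "\<dots> = mat_sandwich k k (tslice n1 k ns Us Q1 is)
          (svd_compose k (tslice k k ns Us U' is) (gst_diag k k ns Us w p tau S' is) (tslice k k ns Us V' is))
          (tslice n2 k ns Us Q2 is) i j"
      using rel v by (intro mat_sandwich_cong svd_compose_cong) (auto simp: gst_diag_def)
    finally show "svd_compose (min n1 n2) (tslice n1 n1 ns Us U is) (gst_diag n1 n2 ns Us w p tau S is)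
        (tslice n2 n2 ns Us V is) i j
      = mat_sandwich k k (tslice n1 k ns Us Q1 is)
          (svd_compose k (tslice k k ns Us U' is) (gst_diag k k ns Us w p tau S' is) (tslice k k ns Us V' is))
          (tslice n2 k ns Us Q2 is) i j" .
  qed
  then show ?thesis using tsvdB unfolding is_gtsvt_iff by blast
qed

lemma prod_list_conv_prod_nth: "prod_list (xs :: nat list) = (\<Prod>i<length xs. xs ! i)"
  by (induction xs) (simp_all add: prod.lessThan_Suc_shift del: prod.lessThan_Suc)

lemma lin_idx_le_prod_list:
  assumes "valid_idx ns is"
  shows "lin_idx ns is \<le> prod_list ns"
proof -
  have "(\<Sum>a<L. is ! a * (\<Prod>b<a. ns ! b)) < (\<Prod>b<L. ns ! b)" if "L \<le> length ns" for L
    using that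
  proof (induction L)
    case (Suc L)
    then have "Suc (is ! L) * (\<Prod>b<L. ns ! b) \<le> ns ! L * (\<Prod>b<L. ns ! b)"
      using assms unfolding valid_idx_def by (intro mult_right_mono) (auto simp: Suc_le_eq)
    then show ?case using Suc by (simp add: algebra_simps)
  qed simp
  then show ?thesis unfolding lin_idx_def prod_list_conv_prod_nth by fastforce
qed

theorem proposition2:
  fixes n1 n2 k :: nat and ns :: "nat list" and Us :: "nat \<Rightarrow> cmat" and al :: "nat \<Rightarrow> real"
    and tau p :: real and w :: "nat \<Rightarrow> nat \<Rightarrow> real" and Q1 Q2 B :: tensor
  assumes "length ns \<ge> 1"
    and "0 < n1" and "0 < n2" and "0 < k" and "\<forall>x\<in>set ns. 0 < x"
    and "is_transform ns Us al"
    and "0 < tau" and "0 < p" and "p < 1"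
    and "\<forall>i j. 1 \<le> i \<longrightarrow> 1 \<le> j \<longrightarrow> j \<le> prod_list ns \<longrightarrow> 0 \<le> w i j"
    and "is_tensor n1 k ns Q1" and "is_tensor n2 k ns Q2" and "is_tensor k k ns B"
    and "real_tensor Q1" and "real_tensor Q2" and "real_tensor B"
    and "part_orth n1 k ns Us al Q1" and "part_orth n2 k ns Us al Q2"
  shows "{X. is_gtsvt n1 n2 ns Us al w p tau
              (tprod n1 k n2 ns Us al (tprod n1 k k ns Us al Q1 B) (ttrans n2 k ns Us al Q2)) X}
       = (\<lambda>Y. tprod n1 k n2 ns Us al (tprod n1 k k ns Us al Q1 Y) (ttrans n2 k ns Us al Q2))
           ` {Y. is_gtsvt k k ns Us al w p tau B Y}"
proof -
  have ns: "ns \<noteq> []" using assms(1) by auto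
  have p: "0 \<le> p" using assms(8) by simp
  have w: "\<forall>is l. valid_idx ns is \<longrightarrow> 0 \<le> tau * w (Suc l) (lin_idx ns is)"
    using assms(7,10) lin_idx_le_prod_list by (simp add: lin_idx_def)
  show ?thesis
    using gtsvt_sandwich_subset[OF assms(6) ns w p assms(17,18,13)]
      gtsvt_sandwich_supset[OF assms(6) ns w p assms(17,18)]
    by blast
qed

end
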